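(* Let $[x,y]$ be a fixed segment. Any finite union, and any (arbitrary) intersection, of slender adornments with base $[x,y]$ is again a slender adornment with base $[x,y]$.
   Context: An adornment is a compact simply connected region $S\subset\mathbb{R}^2$ together with a segment $[x,y]$, $x\neq y$, whose endpoints lie on the boundary of $S$ and with $[x,y]\subseteq S$ (the base). The boundary of $S$ consists of two arcs from $x$ to $y$ (the sides). The adornment is slender if, for a point $p$ moving along either side from $x$ to $y$, $\|p-x\|$ is nondecreasing and $\|p-y\|$ is nonincreasing. *)

theory Defs
  imports "HOL-Analysis.Analysis"
begin

definition adornment_sides :: "(real^2) set \<Rightarrow> real^2 \<Rightarrow> real^2 \<Rightarrow>
    (real \<Rightarrow> real^2) \<Rightarrow> (real \<Rightarrow> real^2) \<Rightarrow> bool" where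
  "adornment_sides S x y g1 g2 \<longleftrightarrow>
     compact S \<and> simply_connected S \<and> x \<noteq> y \<and>
     x \<in> frontier S \<and> y \<in> frontier S \<and> closed_segment x y \<subseteq> S \<and>
     arc g1 \<and> pathstart g1 = x \<and> pathfinish g1 = y \<and>
     arc g2 \<and> pathstart g2 = x \<and> pathfinish g2 = y \<and>
     frontier S = path_image g1 \<union> path_image g2"

definition adornment :: "(real^2) set \<Rightarrow> real^2 \<Rightarrow> real^2 \<Rightarrow> bool" where
  "adornment S x y \<longleftrightarrow> (\<exists>g1 g2. adornment_sides S x y g1 g2)"

definition slender_side :: "(real \<Rightarrow> real^2) \<Rightarrow> real^2 \<Rightarrow> real^2 \<Rightarrow> bool" where
  "slender_side g x y \<longleftrightarrow>
     (\<forall>s\<in>{0..1}. \<forall>t\<in>{0..1}. s \<le> t \<longrightarrow>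
        dist (g s) x \<le> dist (g t) x \<and> dist (g t) y \<le> dist (g s) y)"

definition slender_adornment :: "(real^2) set \<Rightarrow> real^2 \<Rightarrow> real^2 \<Rightarrow> bool" where
  "slender_adornment S x y \<longleftrightarrow>
     (\<exists>g1 g2. adornment_sides S x y g1 g2 \<and> slender_side g1 x y \<and> slender_side g2 x y)"

end

theory Submission
  imports Defs "HOL-Complex_Analysis.Cauchy_Integral_Formula"
begin

text \<open>
  Give a point \<open>p\<close> the coordinates \<open>v = |px| - |py|\<close> and \<open>h = \<plusminus>(|px| + |py| - |xy|)\<close>, the sign
  recording the side of the line \<open>xy\<close> on which \<open>p\<close> lies; these are confocal
  (hyperbolic-elliptic) coordinates with foci \<open>x\<close> and \<open>y\<close>.  Slenderness of a side says
  precisely that along it \<open>v\<close> increases and \<open>|h|\<close> changes by at most the change of \<open>v\<close>, so a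
  slender side is the graph \<open>h = f v\<close> of a 1-Lipschitz profile on \<open>[-|xy|, |xy|]\<close> vanishing at
  both ends.  Compactness and simple connectivity then force a slender adornment to be exactly the
  region \<open>L v \<le> h \<le> U v\<close> between two such profiles with \<open>L \<le> 0 \<le> U\<close>: a vertical ray
  leaving the set must cross a side, and a Jordan loop made of two pieces of sides only encloses
  points of the set.  Conversely each such region is a slender adornment.  Since minima, maxima and
  arbitrary (nonempty) suprema and infima of profiles are profiles, unions of finitely many and
  intersections of arbitrarily many such regions are again such regions.
\<close>

lemma power2_dist_vec2: "(dist p q)\<^sup>2 = ((p - q)$1)\<^sup>2 + ((p - q)$2)\<^sup>2" for p q :: "real^2"
  by (simp add: dist_norm norm_vec_def L2_set_def sum_2)

lemma add_power2_divide: "(a / c)\<^sup>2 + (b / c)\<^sup>2 = (a\<^sup>2 + b\<^sup>2) / c\<^sup>2" for a b c :: real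
  by (simp add: power_divide add_divide_distrib)

lemma sgn_real_sqrt: "sgn (sqrt a) = sgn a"
  by (cases "a \<ge> 0") (auto simp: sgn_if real_sqrt_minus[symmetric])

lemma real_sqrt_sgn_mult: "0 \<le> a \<Longrightarrow> sqrt (sgn b * a) = sgn b * sqrt a"
  by (cases "b > 0"; cases "b = 0") (auto simp: sgn_if real_sqrt_minus)

lemma last_zero_before:
  fixes D :: "real \<Rightarrow> real"
  assumes "a \<le> b" and "continuous_on {a..b} D" and "D a \<le> 0" and "0 < D b"
  shows "\<exists>c\<in>{a..<b}. D c = 0 \<and> (\<forall>w\<in>{c<..b}. 0 < D w)"
proof -
  define Z where "Z = {a..b} \<inter> D -` {..0}"
  have "closed Z"
    unfolding Z_def using assms(2) by (intro continuous_closed_preimage) auto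
  moreover have "bdd_above Z" "a \<in> Z"
    using assms(1,3) by (auto simp: Z_def)
  ultimately have cZ: "Sup Z \<in> Z"
    using closed_contains_Sup by blast
  define c where "c = Sup Z"
  have upper: "w \<le> c" if "w \<in> Z" for w
    unfolding c_def using \<open>bdd_above Z\<close> that by (rule cSup_upper[rotated])
  have c: "a \<le> c" "c \<le> b" "D c \<le> 0"
    using cZ by (auto simp: Z_def c_def)
  then have "c < b"
    using assms(4) by (cases "c = b") auto
  obtain z where z: "c \<le> z" "z \<le> b" "D z = 0"
    using IVT'[of D c 0 b] c assms(4) continuous_on_subset[OF assms(2)] by fastforce
  then have "z = c"
    using upper[of z] c by (auto simp: Z_def)
  moreover have "0 < D w" if "w \<in> {c<..b}" for w
    using upper[of w] that c by (force simp: Z_def)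
  ultimately show ?thesis
    using z c \<open>c < b\<close> by auto
qed

lemma first_zero_after:
  fixes D :: "real \<Rightarrow> real"
  assumes "a \<le> b" and "continuous_on {a..b} D" and "0 < D a" and "D b \<le> 0"
  shows "\<exists>c\<in>{a<..b}. D c = 0 \<and> (\<forall>w\<in>{a..<c}. 0 < D w)"
proof -
  have "continuous_on {-b..-a} (\<lambda>w. D (- w))"
    by (intro continuous_on_compose2[OF assms(2)] continuous_intros) auto
  then obtain c where c: "c \<in> {-b..<-a}" "D (- c) = 0" and pos: "\<forall>w\<in>{c<..-a}. 0 < D (- w)"
    using last_zero_before[of "-b" "-a" "\<lambda>w. D (- w)"] assms by auto
  have "0 < D w" if "w \<in> {a..<-c}" for w
    using pos[rule_format, of "- w"] that by auto
  then show ?thesis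
    using c by (intro bexI[of _ "- c"]) auto
qed

section \<open>Simple loops in simply connected planar sets\<close>

lemma simply_connected_outside_simple_loop:
  fixes S :: "complex set"
  assumes "simply_connected S" and "simple_path \<gamma>" and "pathfinish \<gamma> = pathstart \<gamma>"
    and "path_image \<gamma> \<subseteq> S" and "z \<notin> S"
  shows "z \<in> outside (path_image \<gamma>)"
proof -
  have "winding_number \<gamma> z = 0"
    using simply_connected_imp_winding_number_zero assms simple_path_imp_path by blast
  then have "z \<notin> inside (path_image \<gamma>)"
    using simple_closed_path_norm_winding_number_inside[OF assms(2)] by fastforce
  then show ?thesis
    using assms(4,5) inside_Un_outside[of "path_image \<gamma>"] by blast
qed

lemma outside_linear_image:
  fixes f :: "'a::euclidean_space \<Rightarrow> 'b::euclidean_space"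
  assumes "linear f" and "linear g" and gf: "\<And>z. g (f z) = z" and fg: "\<And>w. f (g w) = w"
    and w: "w \<in> outside (f ` T)"
  shows "g w \<in> outside T"
proof -
  let ?C = "connected_component_set (- f ` T) w"
  have "connected (g ` ?C)"
    using assms(2) linear_continuous_on linear_conv_bounded_linear
    by (intro connected_continuous_image connected_connected_component) blast
  moreover have "g ` ?C \<subseteq> - T"
  proof
    fix q assume "q \<in> g ` ?C"
    then obtain c where c: "c \<in> ?C" "q = g c"
      by blast
    then have "c \<in> - f ` T"
      using connected_component_subset by blast
    then have "f q \<notin> f ` T"
      using c(2) fg by simp
    then show "q \<in> - T"
      by blast
  qed
  moreover have "g w \<in> g ` ?C"
    using w by (auto simp: outside_def)
  ultimately have "g ` ?C \<subseteq> connected_component_set (- T) (g w)"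
    by (rule connected_component_maximal[rotated])
  moreover have "\<not> bounded (g ` ?C)"
  proof
    assume "bounded (g ` ?C)"
    then have "bounded (f ` g ` ?C)"
      using assms(1) bounded_linear_image linear_conv_bounded_linear by blast
    then show False
      using w by (simp add: image_image fg outside_def)
  qed
  ultimately have unbounded: "\<not> bounded (connected_component_set (- T) (g w))"
    using bounded_subset by blast
  have "g w \<notin> T"
  proof
    assume "g w \<in> T"
    then have "connected_component_set (- T) (g w) = {}"
      by (metis Compl_iff connected_component_eq_empty)
    with unbounded show False
      by simp
  qed
  with unbounded show ?thesis
    by (simp add: outside_def)
qed

text \<open>The complex plane is where winding numbers live; any euclidean plane is linearly isomorphic to it.\<close>
lemma simply_connected_inside_simple_loop:
  fixes S :: "'a::euclidean_space set"
  assumes "DIM('a) = 2" and "simply_connected S" and "simple_path \<gamma>"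
    and "pathfinish \<gamma> = pathstart \<gamma>" and "path_image \<gamma> \<subseteq> S"
  shows "inside (path_image \<gamma>) \<subseteq> S"
proof
  fix p assume p: "p \<in> inside (path_image \<gamma>)"
  show "p \<in> S"
  proof (rule ccontr)
    assume "p \<notin> S"
    have "DIM('a) = DIM(complex)"
      using assms(1) by simp
    then obtain f :: "'a \<Rightarrow> complex" and g where lin: "linear f" "linear g"
      and gf: "\<And>z. g (f z) = z" and fg: "\<And>w. f (g w) = w"
      by (metis isomorphisms_UNIV_UNIV)
    have cont: "continuous_on A f" "continuous_on B g" for A B
      using lin linear_continuous_on linear_conv_bounded_linear by blast+
    have "homeomorphism S (f ` S) f g"
      by (auto simp: homeomorphism_def cont gf image_iff)
    then have "simply_connected (f ` S)"
      using assms(2) homeomorphic_simply_connected homeomorphic_def by blast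
    moreover have "simple_path (f \<circ> \<gamma>)"
      using assms(3) simple_path_linear_image_eq[OF lin(1)] by (metis gf injI)
    moreover have "path_image (f \<circ> \<gamma>) \<subseteq> f ` S"
      using assms(5) by (auto simp: path_image_compose)
    moreover have "f p \<notin> f ` S"
      using \<open>p \<notin> S\<close> by (metis gf image_iff)
    ultimately have "f p \<in> outside (f ` path_image \<gamma>)"
      using simply_connected_outside_simple_loop[of "f ` S" "f \<circ> \<gamma>" "f p"] assms(4)
      by (simp add: pathstart_compose pathfinish_compose path_image_compose)
    then have "p \<in> outside (path_image \<gamma>)"
      using outside_linear_image[OF lin gf fg] gf by metis
    then show False
      using p inside_Int_outside by blast
  qed
qed

lemma inside_if_frontier_subset:
  fixes B :: "'a::real_normed_vector set"
  assumes "bounded B" and "frontier B \<subseteq> T" and "p \<in> interior B" and "p \<notin> T"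
  shows "p \<in> inside T"
  using interior_inside_frontier[OF assms(1)] inside_mono[OF assms(2)] assms(3,4) by blast

section \<open>Elliptic coordinates\<close>

locale base_segment =
  fixes x y :: "real^2"
  assumes x_neq_y: "x \<noteq> y"
begin

definition "d = dist x y"
definition "dx = (y - x)$1"
definition "dy = (y - x)$2"

text \<open>Cartesian coordinates in the orthonormal frame at \<open>x\<close> whose first axis points towards \<open>y\<close>.\<close>
definition "along p = ((p - x)$1 * dx + (p - x)$2 * dy) / d"
definition "across p = ((p - x)$2 * dx - (p - x)$1 * dy) / d"
definition "frame_point A B = x + (A / d) *\<^sub>R (y - x) + (B / d) *\<^sub>R vector [- dy, dx]"

lemma d_pos: "0 < d"
  using x_neq_y by (simp add: d_def)

lemma dx_dy_sq: "dx * dx + dy * dy = d * d"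
proof -
  have "d * d = (norm (y - x))\<^sup>2"
    by (simp add: d_def dist_norm norm_minus_commute power2_eq_square)
  then show ?thesis
    by (simp add: norm_vec_def L2_set_def sum_2 dx_def dy_def power2_eq_square)
qed

lemma dist_x_frame: "(dist p x)\<^sup>2 = (along p)\<^sup>2 + (across p)\<^sup>2"
proof -
  define a b where "a = (p - x)$1" and "b = (p - x)$2"
  have "(dist p x)\<^sup>2 = a\<^sup>2 + b\<^sup>2"
    by (simp add: power2_dist_vec2 a_def b_def)
  moreover have "(along p)\<^sup>2 + (across p)\<^sup>2 = ((a * dx + b * dy)\<^sup>2 + (b * dx - a * dy)\<^sup>2) / d\<^sup>2"
    unfolding along_def across_def a_def[symmetric] b_def[symmetric] by (rule add_power2_divide)
  moreover have "(a * dx + b * dy)\<^sup>2 + (b * dx - a * dy)\<^sup>2 = (a\<^sup>2 + b\<^sup>2) * d\<^sup>2"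
    unfolding power2_eq_square[of d] dx_dy_sq[symmetric] by algebra
  ultimately show ?thesis
    using d_pos by simp
qed

lemma dist_y_frame: "(dist p y)\<^sup>2 = (along p - d)\<^sup>2 + (across p)\<^sup>2"
proof -
  define a b where "a = (p - x)$1" and "b = (p - x)$2"
  have "p - y = (p - x) - (y - x)"
    by simp
  then have "(dist p y)\<^sup>2 = (a - dx)\<^sup>2 + (b - dy)\<^sup>2"
    by (simp only: power2_dist_vec2 a_def b_def dx_def dy_def vector_minus_component)
  moreover have "along p - d = (a * dx + b * dy - d\<^sup>2) / d"
    unfolding along_def a_def[symmetric] b_def[symmetric] using d_pos
    by (simp add: field_simps power2_eq_square)
  then have "(along p - d)\<^sup>2 + (across p)\<^sup>2 = ((a * dx + b * dy - d\<^sup>2)\<^sup>2 + (b * dx - a * dy)\<^sup>2) / d\<^sup>2"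
    unfolding across_def a_def[symmetric] b_def[symmetric] by (simp only: add_power2_divide)
  moreover have "(a * dx + b * dy - d\<^sup>2)\<^sup>2 + (b * dx - a * dy)\<^sup>2 = ((a - dx)\<^sup>2 + (b - dy)\<^sup>2) * d\<^sup>2"
    unfolding power2_eq_square[of d] dx_dy_sq[symmetric] by algebra
  ultimately show ?thesis
    using d_pos by simp
qed

lemma frame_point_components:
  "(frame_point A B - x)$1 = (A / d) * dx - (B / d) * dy"
  "(frame_point A B - x)$2 = (A / d) * dy + (B / d) * dx"
  using d_pos by (simp_all add: frame_point_def dx_def dy_def field_simps)

lemma along_frame_point: "along (frame_point A B) = A"
proof -
  have "(A / d * dx - B / d * dy) * dx + (A / d * dy + B / d * dx) * dy = (A / d) * (dx * dx + dy * dy)"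
    by algebra
  then show ?thesis
    using d_pos unfolding along_def frame_point_components dx_dy_sq by simp
qed

lemma across_frame_point: "across (frame_point A B) = B"
proof -
  have "(A / d * dy + B / d * dx) * dx - (A / d * dx - B / d * dy) * dy = (B / d) * (dx * dx + dy * dy)"
    by algebra
  then show ?thesis
    using d_pos unfolding across_def frame_point_components dx_dy_sq by simp
qed

lemma frame_point_along_across: "frame_point (along p) (across p) = p"
proof -
  define a b where "a = (p - x)$1" and "b = (p - x)$2"
  have "((a * dx + b * dy) / d / d) * dx - ((b * dx - a * dy) / d / d) * dy = a * (dx * dx + dy * dy) / d / d"
       "((a * dx + b * dy) / d / d) * dy + ((b * dx - a * dy) / d / d) * dx = b * (dx * dx + dy * dy) / d / d"
    by algebra+
  then have "frame_point (along p) (across p) - x = p - x"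
    using d_pos unfolding vec_eq_iff forall_2 frame_point_components along_def across_def
      a_def[symmetric] b_def[symmetric] dx_dy_sq
    by (simp add: a_def b_def)
  then show ?thesis
    by simp
qed

definition "dist_diff p = dist p x - dist p y"
definition "dist_sum p = dist p x + dist p y"
definition "height p = sgn (across p) * (dist_sum p - d)"

text \<open>The inverse of \<open>p \<mapsto> (dist_diff p, height p)\<close> on the lens: the point with
  \<open>dist_diff = v\<close> and \<open>dist_sum = d + \<bar>h\<bar>\<close> on the side of the line \<open>xy\<close> given by the sign of \<open>h\<close>
  (\<open>sqrt\<close> is odd on negative arguments).  For \<open>\<bar>v\<bar> = d\<close> it lies on the line \<open>xy\<close>.\<close>
definition "coord_point v h =
  frame_point (((d + \<bar>h\<bar>) * v + d\<^sup>2) / (2 * d)) (sqrt (h * (\<bar>h\<bar> + 2 * d)) * sqrt (d\<^sup>2 - v\<^sup>2) / (2 * d))"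

definition "lens = cball x d \<inter> cball y d"

lemma dist_sum_ge: "d \<le> dist_sum p"
  unfolding dist_sum_def d_def by (metis dist_commute dist_triangle)

lemma abs_dist_diff_le: "\<bar>dist_diff p\<bar> \<le> d"
  using dist_triangle[of p x y] dist_triangle[of p y x]
  unfolding dist_diff_def d_def by (simp add: dist_commute)

lemma dist_diff_bounds: "- d \<le> dist_diff p" "dist_diff p \<le> d"
  using abs_dist_diff_le[of p] by (simp_all add: abs_le_iff)

lemma dist_diff_mem: "dist_diff p \<in> {-d..d}"
  using dist_diff_bounds[of p] by simp

lemma along_eq: "along p = (dist_sum p * dist_diff p + d\<^sup>2) / (2 * d)"
proof -
  have "dist_sum p * dist_diff p = (dist p x)\<^sup>2 - (dist p y)\<^sup>2"
    unfolding dist_sum_def dist_diff_def by (simp add: power2_eq_square algebra_simps)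
  also have "\<dots> = 2 * d * along p - d\<^sup>2"
    unfolding dist_x_frame dist_y_frame by (simp add: power2_eq_square algebra_simps)
  finally show ?thesis
    using d_pos by (simp add: field_simps)
qed

lemma across_sq: "(across p)\<^sup>2 = ((dist_sum p)\<^sup>2 - d\<^sup>2) * (d\<^sup>2 - (dist_diff p)\<^sup>2) / (4 * d\<^sup>2)"
proof -
  have half: "dist p x = (dist_sum p + dist_diff p) / 2"
    unfolding dist_sum_def dist_diff_def by simp
  have "(across p)\<^sup>2 = (dist p x)\<^sup>2 - (along p)\<^sup>2"
    using dist_x_frame[of p] by simp
  also have "\<dots> = ((dist_sum p + dist_diff p) / 2)\<^sup>2 - ((dist_sum p * dist_diff p + d\<^sup>2) / (2 * d))\<^sup>2"
    unfolding half along_eq ..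
  also have "\<dots> = ((dist_sum p)\<^sup>2 - d\<^sup>2) * (d\<^sup>2 - (dist_diff p)\<^sup>2) / (4 * d\<^sup>2)"
    using d_pos by (simp add: field_simps power2_eq_square)
  finally show ?thesis .
qed

lemma dist_sum_eq_if_across_eq_0:
  assumes "across p = 0" and "\<bar>dist_diff p\<bar> < d"
  shows "dist_sum p = d"
proof -
  have "d\<^sup>2 - (dist_diff p)\<^sup>2 > 0"
    using assms(2) abs_le_square_iff[of d "dist_diff p"] d_pos by (auto simp: abs_less_iff power2_eq_square)
  then have "(dist_sum p)\<^sup>2 = d\<^sup>2"
    using across_sq[of p] assms(1) d_pos by simp
  then show ?thesis
    using dist_sum_ge[of p] d_pos by (simp add: power2_eq_iff_nonneg)
qed

lemma dist_coord_point:
  assumes "\<bar>v\<bar> \<le> d"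
  shows "dist (coord_point v h) x = (d + \<bar>h\<bar> + v) / 2"
    and "dist (coord_point v h) y = (d + \<bar>h\<bar> - v) / 2"
proof -
  define u A B where "u = d + \<bar>h\<bar>"
    and "A = (u * v + d\<^sup>2) / (2 * d)"
    and "B = sqrt (h * (\<bar>h\<bar> + 2 * d)) * sqrt (d\<^sup>2 - v\<^sup>2) / (2 * d)"
  have P: "coord_point v h = frame_point A B"
    unfolding coord_point_def A_def B_def u_def ..
  have "d\<^sup>2 - v\<^sup>2 \<ge> 0"
    using assms abs_le_square_iff[of v d] d_pos by simp
  moreover have "\<bar>h * (\<bar>h\<bar> + 2 * d)\<bar> = u\<^sup>2 - d\<^sup>2"
  proof -
    have "\<bar>h * (\<bar>h\<bar> + 2 * d)\<bar> = \<bar>h\<bar> * (\<bar>h\<bar> + 2 * d)"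
      using d_pos by (simp add: abs_mult)
    then show ?thesis
      by (simp add: u_def power2_eq_square algebra_simps)
  qed
  ultimately have B2: "B\<^sup>2 = (u\<^sup>2 - d\<^sup>2) * (d\<^sup>2 - v\<^sup>2) / (4 * d\<^sup>2)"
    unfolding B_def by (simp add: power_divide power_mult_distrib power2_eq_square[of "sqrt _"])
  have uv: "u + v \<ge> 0" "u - v \<ge> 0"
    using assms unfolding u_def by auto
  have "(dist (coord_point v h) x)\<^sup>2 = A\<^sup>2 + B\<^sup>2"
    unfolding P dist_x_frame along_frame_point across_frame_point ..
  also have "\<dots> = ((u + v) / 2)\<^sup>2"
    unfolding B2 A_def using d_pos by (simp add: field_simps power2_eq_square)
  finally show "dist (coord_point v h) x = (d + \<bar>h\<bar> + v) / 2"
    using uv by (simp add: u_def power2_eq_iff_nonneg)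
  have "(dist (coord_point v h) y)\<^sup>2 = (A - d)\<^sup>2 + B\<^sup>2"
    unfolding P dist_y_frame along_frame_point across_frame_point ..
  also have "\<dots> = ((u - v) / 2)\<^sup>2"
    unfolding B2 A_def using d_pos by (simp add: field_simps power2_eq_square)
  finally show "dist (coord_point v h) y = (d + \<bar>h\<bar> - v) / 2"
    using uv by (simp add: u_def power2_eq_iff_nonneg)
qed

lemma dist_diff_coord_point: "\<bar>v\<bar> \<le> d \<Longrightarrow> dist_diff (coord_point v h) = v"
  by (simp add: dist_diff_def dist_coord_point field_simps)

lemma dist_sum_coord_point: "\<bar>v\<bar> \<le> d \<Longrightarrow> dist_sum (coord_point v h) = d + \<bar>h\<bar>"
  by (simp add: dist_sum_def dist_coord_point field_simps)

lemma height_coord_point: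
  assumes "\<bar>v\<bar> \<le> d" and "\<bar>v\<bar> < d \<or> h = 0"
  shows "height (coord_point v h) = h"
proof (cases "h = 0")
  case False
  then have "d\<^sup>2 - v\<^sup>2 > 0"
    using assms abs_le_square_iff[of d v] d_pos by (auto simp: abs_less_iff power2_eq_square)
  moreover have "\<bar>h\<bar> + 2 * d > 0"
    using d_pos by simp
  ultimately have "sgn (across (coord_point v h)) = sgn h"
    unfolding coord_point_def across_frame_point using d_pos
    by (simp add: sgn_mult sgn_divide sgn_real_sqrt)
  then show ?thesis
    using assms by (simp add: height_def dist_sum_coord_point sgn_mult_abs)
qed (use assms in \<open>simp add: height_def dist_sum_coord_point\<close>)

lemma coord_point_eq_iff:
  assumes "\<bar>v\<bar> \<le> d" "\<bar>v'\<bar> \<le> d" "\<bar>v\<bar> < d \<or> h = 0" "\<bar>v'\<bar> < d \<or> h' = 0"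
  shows "coord_point v h = coord_point v' h' \<longleftrightarrow> v = v' \<and> h = h'"
  using dist_diff_coord_point[OF assms(1), of h] dist_diff_coord_point[OF assms(2), of h']
    height_coord_point[OF assms(1,3)] height_coord_point[OF assms(2,4)]
  by metis

lemma abs_height:
  assumes "across p \<noteq> 0 \<or> dist_sum p = d"
  shows "\<bar>height p\<bar> = dist_sum p - d"
  using assms dist_sum_ge[of p] by (auto simp: height_def abs_mult sgn_if)

lemma coord_point_coords:
  assumes "across p \<noteq> 0 \<or> dist_sum p = d"
  shows "coord_point (dist_diff p) (height p) = p"
proof -
  define u v b where "u = dist_sum p" and "v = dist_diff p" and "b = across p"
  have h: "\<bar>height p\<bar> = u - d"
    using abs_height[OF assms] by (simp add: u_def)
  have "d\<^sup>2 \<le> u\<^sup>2"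
    using dist_sum_ge[of p] d_pos by (simp add: u_def power_mono)
  then have s1: "sqrt (sgn b * (u\<^sup>2 - d\<^sup>2)) = sgn b * sqrt (u\<^sup>2 - d\<^sup>2)"
    by (intro real_sqrt_sgn_mult) simp
  have s4: "sqrt (4 * d\<^sup>2) = 2 * d"
    using d_pos by (simp add: real_sqrt_mult)
  have s2: "sqrt ((u\<^sup>2 - d\<^sup>2) * (d\<^sup>2 - v\<^sup>2) / (4 * d\<^sup>2)) = sqrt (u\<^sup>2 - d\<^sup>2) * sqrt (d\<^sup>2 - v\<^sup>2) / (2 * d)"
    by (subst real_sqrt_divide, subst s4, subst real_sqrt_mult, rule refl)
  have prod: "height p * (\<bar>height p\<bar> + 2 * d) = sgn b * (u\<^sup>2 - d\<^sup>2)"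
    unfolding h by (simp add: height_def b_def u_def power2_eq_square algebra_simps)
  have "sqrt (height p * (\<bar>height p\<bar> + 2 * d)) * sqrt (d\<^sup>2 - v\<^sup>2) / (2 * d)
      = sgn b * sqrt ((u\<^sup>2 - d\<^sup>2) * (d\<^sup>2 - v\<^sup>2) / (4 * d\<^sup>2))"
    unfolding prod s1 s2 by simp
  also have "\<dots> = sgn b * sqrt (b\<^sup>2)"
    using across_sq[of p] by (simp add: b_def u_def v_def)
  also have "\<dots> = b"
    by (simp add: sgn_mult_abs)
  finally show ?thesis
    unfolding coord_point_def using h frame_point_along_across[of p]
    by (simp add: along_eq u_def v_def b_def)
qed

lemma lens_across_or_dist_sum:
  assumes "p \<in> lens"
  shows "across p \<noteq> 0 \<or> dist_sum p = d"
proof (cases "across p = 0 \<and> \<bar>dist_diff p\<bar> = d")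
  case True
  moreover have "dist p x \<le> d" "dist p y \<le> d"
    using assms by (auto simp: lens_def dist_commute)
  ultimately show ?thesis
    unfolding dist_diff_def dist_sum_def by (smt (verit) zero_le_dist)
next
  case False
  then show ?thesis
    using dist_sum_eq_if_across_eq_0 abs_dist_diff_le[of p] by fastforce
qed

lemma coord_point_coords_lens: "p \<in> lens \<Longrightarrow> coord_point (dist_diff p) (height p) = p"
  using coord_point_coords lens_across_or_dist_sum by blast

lemma coord_point_coords_strip: "\<bar>dist_diff p\<bar> < d \<Longrightarrow> coord_point (dist_diff p) (height p) = p"
  using coord_point_coords dist_sum_eq_if_across_eq_0 by blast

lemma coord_point_beyond:
  assumes "\<bar>dist_diff p\<bar> = d"
  shows "coord_point (dist_diff p) (dist_sum p - d) = p"
proof -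
  have "d\<^sup>2 - (dist_diff p)\<^sup>2 = 0"
    using assms by (metis power2_abs diff_self)
  then have "across p = 0"
    using across_sq[of p] by simp
  moreover have "((d + \<bar>dist_sum p - d\<bar>) * dist_diff p + d\<^sup>2) / (2 * d) = along p"
    using dist_sum_ge[of p] by (simp add: along_eq)
  ultimately show ?thesis
    unfolding coord_point_def using \<open>d\<^sup>2 - (dist_diff p)\<^sup>2 = 0\<close> frame_point_along_across[of p] by simp
qed

lemma coord_point_in_lens_iff: "\<bar>v\<bar> \<le> d \<Longrightarrow> coord_point v h \<in> lens \<longleftrightarrow> \<bar>h\<bar> \<le> d - \<bar>v\<bar>"
  using dist_coord_point[of v h] by (auto simp: lens_def dist_commute)

lemma coord_point_left: "coord_point (- d) 0 = x"
  using d_pos by (simp add: coord_point_def frame_point_def power2_eq_square)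

lemma coord_point_right: "coord_point d 0 = y"
  using d_pos by (simp add: coord_point_def frame_point_def power2_eq_square)

lemma coord_point_0_mem_segment:
  assumes "\<bar>v\<bar> \<le> d"
  shows "coord_point v 0 \<in> closed_segment x y"
proof -
  define t where "t = (v + d) / (2 * d)"
  have "0 \<le> t" "t \<le> 1"
    using assms d_pos unfolding t_def by (auto simp: field_simps)
  moreover have "((d + \<bar>0\<bar>) * v + d\<^sup>2) / (2 * d) / d = t"
    using d_pos by (simp add: t_def field_simps power2_eq_square)
  then have "coord_point v 0 = (1 - t) *\<^sub>R x + t *\<^sub>R y"
    unfolding coord_point_def frame_point_def by (simp add: algebra_simps)
  ultimately show ?thesis
    unfolding closed_segment_def by blast
qed

lemma dist_diff_x: "dist_diff x = - d"
  by (simp add: dist_diff_def d_def)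

lemma dist_diff_y: "dist_diff y = d"
  by (simp add: dist_diff_def d_def dist_commute)

lemma height_x: "height x = 0"
  by (simp add: height_def across_def)

lemma height_y: "height y = 0"
  by (simp add: height_def across_def dx_def dy_def)

lemma continuous_on_coord_point [continuous_intros]:
  "continuous_on S f \<Longrightarrow> continuous_on S g \<Longrightarrow> continuous_on S (\<lambda>t. coord_point (f t) (g t))"
  unfolding coord_point_def frame_point_def using d_pos by (intro continuous_intros) auto

lemma continuous_on_across [continuous_intros]: "continuous_on S across"
  unfolding across_def[abs_def] using d_pos by (intro continuous_intros) auto

lemma continuous_on_dist_sum [continuous_intros]: "continuous_on S dist_sum"
  unfolding dist_sum_def[abs_def] by (intro continuous_intros)

lemma continuous_on_dist_diff [continuous_intros]: "continuous_on S dist_diff"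
  unfolding dist_diff_def[abs_def] by (intro continuous_intros)

text \<open>\<open>height\<close> is discontinuous on the line \<open>xy\<close> beyond \<open>x\<close> and \<open>y\<close>, but not inside the lens.\<close>
lemma continuous_on_height: "continuous_on lens height"
  unfolding continuous_on_def
proof
  fix p assume p: "p \<in> lens"
  have across: "(across \<longlongrightarrow> across p) (at p within lens)"
    and sum: "(dist_sum \<longlongrightarrow> dist_sum p) (at p within lens)"
    using p continuous_on_across continuous_on_dist_sum by (auto simp: continuous_on_def)
  show "(height \<longlongrightarrow> height p) (at p within lens)"
  proof (cases "across p = 0")
    case False
    have "((\<lambda>q. sgn (across q) * (dist_sum q - d)) \<longlongrightarrow> sgn (across p) * (dist_sum p - d)) (at p within lens)"
      by (intro tendsto_intros across sum False)
    then show ?thesis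
      by (simp add: height_def[abs_def])
  next
    case True
    then have "dist_sum p = d"
      using lens_across_or_dist_sum[OF p] by simp
    have "eventually (\<lambda>q. norm (height q) \<le> dist_sum q - d) (at p within lens)"
      using dist_sum_ge by (intro always_eventually allI) (auto simp: height_def abs_mult sgn_if)
    moreover have "((\<lambda>q. dist_sum q - d) \<longlongrightarrow> 0) (at p within lens)"
      using tendsto_diff[OF sum tendsto_const[of d]] \<open>dist_sum p = d\<close> by simp
    ultimately have "(height \<longlongrightarrow> 0) (at p within lens)"
      by (rule Lim_null_comparison)
    then show ?thesis
      using True by (simp add: height_def)
  qed
qed

lemma compact_lens: "compact lens"
  unfolding lens_def by (intro compact_Int_closed) auto

section \<open>Regions between profiles\<close>

definition profile :: "(real \<Rightarrow> real) \<Rightarrow> bool" where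
  "profile f \<longleftrightarrow> 1-lipschitz_on {-d..d} f \<and> f (- d) = 0 \<and> f d = 0"

definition "profile_pair L U \<longleftrightarrow> profile L \<and> profile U \<and> (\<forall>v\<in>{-d..d}. L v \<le> 0 \<and> 0 \<le> U v)"

definition "region L U = {p \<in> lens. L (dist_diff p) \<le> height p \<and> height p \<le> U (dist_diff p)}"

definition "coord_region L U = {z. fst z \<in> {-d..d} \<and> L (fst z) \<le> snd z \<and> snd z \<le> U (fst z)}"

definition "profile_graph f = (\<lambda>v. coord_point v (f v)) ` {-d..d}"

lemma profileI:
  assumes "\<And>v w. v \<in> {-d..d} \<Longrightarrow> w \<in> {-d..d} \<Longrightarrow> \<bar>f v - f w\<bar> \<le> \<bar>v - w\<bar>"
    and "f (- d) = 0" and "f d = 0"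
  shows "profile f"
  using assms by (auto simp: profile_def dist_real_def intro: lipschitz_onI)

lemma profile_lipschitz:
  "profile f \<Longrightarrow> v \<in> {-d..d} \<Longrightarrow> w \<in> {-d..d} \<Longrightarrow> \<bar>f v - f w\<bar> \<le> \<bar>v - w\<bar>"
  unfolding profile_def lipschitz_on_def dist_real_def by auto

lemma profile_ends: "profile f \<Longrightarrow> f (- d) = 0" "profile f \<Longrightarrow> f d = 0"
  by (simp_all add: profile_def)

lemma continuous_on_profile: "profile f \<Longrightarrow> continuous_on {-d..d} f"
  unfolding profile_def using lipschitz_on_continuous_on by blast

lemma abs_profile_le:
  assumes "profile f" and "v \<in> {-d..d}"
  shows "\<bar>f v\<bar> \<le> d - \<bar>v\<bar>"
  using profile_lipschitz[OF assms(1) assms(2), of "- d"] profile_lipschitz[OF assms(1) assms(2), of d]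
    profile_ends[OF assms(1)] assms(2) d_pos by auto

lemma profile_at_end:
  "profile f \<Longrightarrow> v \<in> {-d..d} \<Longrightarrow> \<bar>v\<bar> < d \<or> f v = 0"
  using abs_profile_le[of f v] by (cases "\<bar>v\<bar> < d") auto

lemma profile_min:
  assumes "profile f" and "profile g"
  shows "profile (\<lambda>v. min (f v) (g v))"
proof (rule profileI)
  fix v w assume "v \<in> {-d..d}" "w \<in> {-d..d}"
  then have "\<bar>f v - f w\<bar> \<le> \<bar>v - w\<bar>" "\<bar>g v - g w\<bar> \<le> \<bar>v - w\<bar>"
    using assms profile_lipschitz by blast+
  then show "\<bar>min (f v) (g v) - min (f w) (g w)\<bar> \<le> \<bar>v - w\<bar>"
    by (simp add: min_def abs_le_iff)
qed (use assms in \<open>simp_all add: profile_ends\<close>)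

lemma profile_max:
  assumes "profile f" and "profile g"
  shows "profile (\<lambda>v. max (f v) (g v))"
proof (rule profileI)
  fix v w assume "v \<in> {-d..d}" "w \<in> {-d..d}"
  then have "\<bar>f v - f w\<bar> \<le> \<bar>v - w\<bar>" "\<bar>g v - g w\<bar> \<le> \<bar>v - w\<bar>"
    using assms profile_lipschitz by blast+
  then show "\<bar>max (f v) (g v) - max (f w) (g w)\<bar> \<le> \<bar>v - w\<bar>"
    by (simp add: max_def abs_le_iff)
qed (use assms in \<open>simp_all add: profile_ends\<close>)

lemma profile_pair_bounds:
  "profile_pair L U \<Longrightarrow> v \<in> {-d..d} \<Longrightarrow> L v \<le> 0 \<and> 0 \<le> U v"
  by (simp add: profile_pair_def)

lemma coord_region_at_end:
  assumes "profile_pair L U" and "z \<in> coord_region L U"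
  shows "\<bar>fst z\<bar> < d \<or> snd z = 0"
  using assms profile_at_end[of L "fst z"] profile_at_end[of U "fst z"]
  by (auto simp: coord_region_def profile_pair_def)

lemma coord_point_in_region:
  assumes "profile_pair L U" and "v \<in> {-d..d}" and "L v \<le> h" and "h \<le> U v"
  shows "coord_point v h \<in> region L U"
proof -
  have "\<bar>v\<bar> \<le> d" "\<bar>v\<bar> < d \<or> h = 0"
    using assms coord_region_at_end[of L U "(v, h)"] by (auto simp: coord_region_def)
  moreover have "\<bar>h\<bar> \<le> d - \<bar>v\<bar>"
    using assms abs_profile_le[of L v] abs_profile_le[of U v] by (auto simp: profile_pair_def)
  ultimately show ?thesis
    using assms coord_point_in_lens_iff dist_diff_coord_point height_coord_point
    by (simp add: region_def)
qed

lemma region_eq_image: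
  assumes "profile_pair L U"
  shows "region L U = (\<lambda>z. coord_point (fst z) (snd z)) ` coord_region L U"
proof
  show "region L U \<subseteq> (\<lambda>z. coord_point (fst z) (snd z)) ` coord_region L U"
  proof
    fix p assume p: "p \<in> region L U"
    then have "p = coord_point (dist_diff p) (height p)"
      using coord_point_coords_lens by (auto simp: region_def)
    moreover have "(dist_diff p, height p) \<in> coord_region L U"
      using p dist_diff_mem[of p] by (auto simp: region_def coord_region_def)
    ultimately show "p \<in> (\<lambda>z. coord_point (fst z) (snd z)) ` coord_region L U"
      by (intro rev_image_eqI[of "(dist_diff p, height p)"]) simp_all
  qed
  show "(\<lambda>z. coord_point (fst z) (snd z)) ` coord_region L U \<subseteq> region L U"
    using coord_point_in_region[OF assms] by (auto simp: coord_region_def)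
qed

lemma compact_coord_region:
  assumes "profile_pair L U"
  shows "compact (coord_region L U)"
proof -
  have cont: "continuous_on ({-d..d} \<times> UNIV) (\<lambda>z. (L (fst z) - snd z, snd z - U (fst z)))"
    using assms continuous_on_profile
    by (intro continuous_intros continuous_on_compose2[of "{-d..d}" _ _ fst]) (auto simp: profile_pair_def)
  have "coord_region L U = ({-d..d} \<times> UNIV) \<inter> (\<lambda>z. (L (fst z) - snd z, snd z - U (fst z))) -` ({..0} \<times> {..0})"
    by (auto simp: coord_region_def)
  then have "closed (coord_region L U)"
    using cont by (auto intro!: continuous_closed_preimage closed_Times)
  moreover have "coord_region L U \<subseteq> {-d..d} \<times> {-d..d}"
    using assms abs_profile_le[of L] abs_profile_le[of U]
    by (fastforce simp: coord_region_def profile_pair_def abs_le_iff)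
  then have "bounded (coord_region L U)"
    by (rule bounded_subset[OF compact_imp_bounded[OF compact_Times[OF compact_Icc compact_Icc]]])
  ultimately show ?thesis
    by (simp add: compact_eq_bounded_closed)
qed

lemma compact_region: "profile_pair L U \<Longrightarrow> compact (region L U)"
  unfolding region_eq_image
  by (intro compact_continuous_image compact_coord_region continuous_intros)

lemma inj_on_coord_region:
  assumes "profile_pair L U"
  shows "inj_on (\<lambda>z. coord_point (fst z) (snd z)) (coord_region L U)"
proof (rule inj_onI)
  fix z w assume z: "z \<in> coord_region L U" and w: "w \<in> coord_region L U"
    and eq: "coord_point (fst z) (snd z) = coord_point (fst w) (snd w)"
  have "\<bar>fst z\<bar> \<le> d" and "\<bar>fst w\<bar> \<le> d"
    using z w by (auto simp: coord_region_def)
  then show "z = w"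
    using eq coord_point_eq_iff coord_region_at_end[OF assms z] coord_region_at_end[OF assms w]
    by (simp add: prod_eq_iff)
qed

lemma contractible_coord_region:
  assumes "profile_pair L U"
  shows "contractible (coord_region L U)"
proof -
  have base: "{-d..d} \<times> {0} \<subseteq> coord_region L U"
    using assms by (auto simp: coord_region_def profile_pair_def)
  have vertical: "closed_segment z (fst z, 0) \<subseteq> coord_region L U" if z: "z \<in> coord_region L U" for z
  proof -
    let ?F = "{fst z} \<times> {L (fst z)..U (fst z)}"
    have "z \<in> ?F" "(fst z, 0) \<in> ?F"
      using z assms by (auto simp: coord_region_def profile_pair_def mem_Times_iff)
    then have "closed_segment z (fst z, 0) \<subseteq> ?F"
      by (rule closed_segment_subset) (simp add: convex_Times)
    also have "?F \<subseteq> coord_region L U"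
      using z by (auto simp: coord_region_def)
    finally show ?thesis .
  qed
  have horizontal: "closed_segment (fst z, 0) (0, 0) \<subseteq> coord_region L U"
    if z: "z \<in> coord_region L U" for z :: "real \<times> real"
  proof -
    have "(fst z, 0) \<in> {-d..d} \<times> {0}" "(0, 0) \<in> {-d..d} \<times> {0 :: real}"
      using z d_pos by (auto simp: coord_region_def)
    then have "closed_segment (fst z, 0) (0, 0) \<subseteq> {-d..d} \<times> {0 :: real}"
      by (rule closed_segment_subset) (simp add: convex_Times)
    then show ?thesis
      using base by blast
  qed
  have proj: "continuous_on (coord_region L U) (\<lambda>z. (fst z, 0 :: real))"
    by (intro continuous_intros)
  have "homotopic_with_canon (\<lambda>_. True) (coord_region L U) (coord_region L U) id (\<lambda>z. (fst z, 0))"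
    using vertical by (intro homotopic_with_linear[OF continuous_on_id' proj]) simp
  moreover have "homotopic_with_canon (\<lambda>_. True) (coord_region L U) (coord_region L U) (\<lambda>z. (fst z, 0)) (\<lambda>_. (0, 0))"
    using horizontal by (intro homotopic_with_linear[OF proj continuous_on_const])
  ultimately show ?thesis
    unfolding contractible_def using homotopic_with_trans by blast
qed

lemma simply_connected_region:
  assumes "profile_pair L U"
  shows "simply_connected (region L U)"
proof -
  have "continuous_on (coord_region L U) (\<lambda>z. coord_point (fst z) (snd z))"
    by (intro continuous_intros)
  then have "coord_region L U homeomorphic region L U"
    unfolding homeomorphic_def region_eq_image[OF assms]
    using homeomorphism_compact[OF compact_coord_region[OF assms] _ refl inj_on_coord_region[OF assms]]
    by blast
  then show ?thesis
    using contractible_imp_simply_connected[OF contractible_coord_region[OF assms]]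
      homeomorphic_simply_connected by blast
qed

lemma between_profiles_in_balls:
  assumes "profile f" and "profile g" and "q \<in> lens"
    and "f (dist_diff q) < height q" and "height q < g (dist_diff q)"
  shows "q \<in> ball x d \<inter> ball y d"
proof -
  have v: "dist_diff q \<in> {-d..d}" "\<bar>dist_diff q\<bar> \<le> d"
    using dist_diff_mem abs_dist_diff_le by auto
  have "\<bar>height q\<bar> < d - \<bar>dist_diff q\<bar>"
    using assms abs_profile_le[OF assms(1) v(1)] abs_profile_le[OF assms(2) v(1)] by linarith
  moreover have "dist q x = (d + \<bar>height q\<bar> + dist_diff q) / 2"
    "dist q y = (d + \<bar>height q\<bar> - dist_diff q) / 2"
    using dist_coord_point[OF v(2), of "height q"] coord_point_coords_lens[OF assms(3)] by simp_all
  ultimately have "dist q x < d" "dist q y < d"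
    using abs_ge_self[of "dist_diff q"] abs_ge_minus_self[of "dist_diff q"] by simp_all
  then show ?thesis
    by (simp add: dist_commute)
qed

lemma interior_region:
  assumes "profile_pair L U" and "p \<in> lens"
    and "L (dist_diff p) < height p" and "height p < U (dist_diff p)"
  shows "p \<in> interior (region L U)"
proof (rule interiorI)
  let ?O = "ball x d \<inter> ball y d"
  let ?F = "\<lambda>q. (height q - L (dist_diff q), U (dist_diff q) - height q)"
  have "?O \<subseteq> lens"
    by (auto simp: lens_def)
  moreover have "continuous_on lens ?F"
    using assms(1) continuous_on_height
    by (intro continuous_intros continuous_on_compose2[OF continuous_on_profile continuous_on_dist_diff])
      (auto simp: profile_pair_def dist_diff_bounds)
  ultimately show "open (?O \<inter> ?F -` ({0<..} \<times> {0<..}))"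
    by (intro continuous_open_preimage open_Int open_Times) (auto elim: continuous_on_subset)
  show "p \<in> ?O \<inter> ?F -` ({0<..} \<times> {0<..})"
    using assms between_profiles_in_balls[of L U p] by (simp add: profile_pair_def)
  show "?O \<inter> ?F -` ({0<..} \<times> {0<..}) \<subseteq> region L U"
    using \<open>?O \<subseteq> lens\<close> by (auto simp: region_def)
qed

lemma coord_point_in_closure:
  assumes "\<And>e. 0 < e \<Longrightarrow> coord_point v (h + \<sigma> * e) \<in> A"
  shows "coord_point v h \<in> closure A"
proof -
  have "(\<lambda>n. h + \<sigma> * inverse (real (Suc n))) \<longlonglongrightarrow> h + \<sigma> * 0"
    by (intro tendsto_intros LIMSEQ_inverse_real_of_nat)
  moreover have "continuous_on UNIV (coord_point v)"
    using continuous_on_coord_point[OF continuous_on_const continuous_on_id, of UNIV v] by simp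
  ultimately have "(\<lambda>n. coord_point v (h + \<sigma> * inverse (real (Suc n)))) \<longlonglongrightarrow> coord_point v h"
    using continuous_on_tendsto_compose[of UNIV "coord_point v"] by fastforce
  then show ?thesis
    unfolding closure_sequential using assms by (intro exI[of _ "\<lambda>n. coord_point v (h + \<sigma> * inverse (real (Suc n)))"]) auto
qed

lemma frontier_region_subset:
  assumes "profile_pair L U"
  shows "frontier (region L U) \<subseteq> profile_graph U \<union> profile_graph L"
proof
  fix p assume "p \<in> frontier (region L U)"
  then have p: "p \<in> region L U" "p \<notin> interior (region L U)"
    using compact_imp_closed[OF compact_region[OF assms]] by (auto simp: frontier_def)
  then have "p \<in> lens" and bounds: "L (dist_diff p) \<le> height p" "height p \<le> U (dist_diff p)"
    by (auto simp: region_def)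
  then have "\<not> (L (dist_diff p) < height p \<and> height p < U (dist_diff p))"
    using interior_region[OF assms] p(2) by blast
  then have "height p = U (dist_diff p) \<or> height p = L (dist_diff p)"
    using bounds by linarith
  moreover have "p \<in> profile_graph f" if "height p = f (dist_diff p)" for f
  proof -
    have "p = coord_point (dist_diff p) (f (dist_diff p))"
      using coord_point_coords_lens[OF \<open>p \<in> lens\<close>] that by simp
    then show ?thesis
      unfolding profile_graph_def by (rule image_eqI[OF _ dist_diff_mem])
  qed
  ultimately show "p \<in> profile_graph U \<union> profile_graph L"
    by blast
qed

text \<open>Moving off a boundary point vertically, away from the region, leaves the region
  at once: the height changes when \<open>\<bar>v\<bar> < d\<close>, and the lens is left when \<open>\<bar>v\<bar> = d\<close>.\<close>
lemma profile_graphs_subset_frontier: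
  assumes "profile_pair L U"
  shows "profile_graph U \<union> profile_graph L \<subseteq> frontier (region L U)"
proof -
  have "coord_point v (f v) \<in> frontier (region L U)"
    if v: "v \<in> {-d..d}" and f: "f = U \<and> \<sigma> = 1 \<or> f = L \<and> \<sigma> = -1" for v f and \<sigma> :: real
  proof -
    have in_region: "coord_point v (f v) \<in> region L U"
      using coord_point_in_region[OF assms v] f profile_pair_bounds[OF assms v] by auto
    have "coord_point v (f v + \<sigma> * e) \<in> - region L U" if "0 < e" for e
    proof (cases "\<bar>v\<bar> < d")
      case True
      then show ?thesis
        using that f dist_diff_coord_point[of v] height_coord_point[of v] by (auto simp: region_def)
    next
      case False
      then have "f v = 0"
        using f v profile_at_end assms by (auto simp: profile_pair_def)
      then show ?thesis
        using that f False v coord_point_in_lens_iff[of v] by (auto simp: region_def)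
    qed
    then have "coord_point v (f v) \<notin> interior (region L U)"
      using coord_point_in_closure[of v "f v" \<sigma> "- region L U"] by (simp add: closure_complement)
    then show ?thesis
      using in_region closure_subset unfolding frontier_def by blast
  qed
  from this[of _ U 1] this[of _ L "-1"] show ?thesis
    by (auto simp: profile_graph_def)
qed

lemma frontier_region: "profile_pair L U \<Longrightarrow> frontier (region L U) = profile_graph U \<union> profile_graph L"
  using frontier_region_subset profile_graphs_subset_frontier by blast

definition "profile_path f a b t = coord_point (a + (b - a) * t) (f (a + (b - a) * t))"

context
  fixes f a b
  assumes f: "profile f" and ab: "- d \<le> a" "a < b" "b \<le> d"
begin

lemma profile_path_param:
  assumes "t \<in> {0..1}"
  shows "a + (b - a) * t \<in> {a..b}"
proof -
  have "(b - a) * t \<le> b - a" "0 \<le> (b - a) * t"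
    using assms ab mult_left_le[of t "b - a"] by auto
  then show ?thesis
    by auto
qed

lemma profile_path_param_mem:
  assumes "t \<in> {0..1}"
  shows "a + (b - a) * t \<in> {-d..d}"
  using profile_path_param[OF assms] ab unfolding atLeastAtMost_iff by linarith

lemma profile_path_param_bound: "t \<in> {0..1} \<Longrightarrow> \<bar>a + (b - a) * t\<bar> \<le> d"
  using profile_path_param_mem[of t] by (simp add: abs_le_iff)

lemma path_image_profile_path: "path_image (profile_path f a b) = (\<lambda>w. coord_point w (f w)) ` {a..b}"
proof
  show "path_image (profile_path f a b) \<subseteq> (\<lambda>w. coord_point w (f w)) ` {a..b}"
    unfolding path_image_def profile_path_def using profile_path_param by blast
  show "(\<lambda>w. coord_point w (f w)) ` {a..b} \<subseteq> path_image (profile_path f a b)"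
  proof
    fix q assume "q \<in> (\<lambda>w. coord_point w (f w)) ` {a..b}"
    then obtain w where w: "w \<in> {a..b}" "q = coord_point w (f w)"
      by auto
    define t where "t = (w - a) / (b - a)"
    have "t \<in> {0..1}" "a + (b - a) * t = w"
      using w ab by (auto simp: t_def divide_le_eq_1)
    then have "q = profile_path f a b t"
      using w by (simp add: profile_path_def)
    then show "q \<in> path_image (profile_path f a b)"
      unfolding path_image_def using \<open>t \<in> {0..1}\<close> by (rule image_eqI)
  qed
qed

lemma dist_diff_profile_path: "t \<in> {0..1} \<Longrightarrow> dist_diff (profile_path f a b t) = a + (b - a) * t"
  unfolding profile_path_def by (simp add: dist_diff_coord_point profile_path_param_bound)

lemma arc_profile_path: "arc (profile_path f a b)"
  unfolding arc_def
proof
  have "continuous_on {0..1} (\<lambda>t. f (a + (b - a) * t))"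
  proof (rule continuous_on_compose2[OF continuous_on_profile[OF f]])
    show "continuous_on {0..1} (\<lambda>t. a + (b - a) * t)"
      by (intro continuous_intros)
    show "(\<lambda>t. a + (b - a) * t) ` {0..1} \<subseteq> {-d..d}"
      using profile_path_param_mem by blast
  qed
  then show "path (profile_path f a b)"
    unfolding path_def profile_path_def by (intro continuous_intros)
  show "inj_on (profile_path f a b) {0..1}"
  proof (rule inj_onI)
    fix s t assume "s \<in> {0..1}" "t \<in> {0..1}" "profile_path f a b s = profile_path f a b t"
    then have "a + (b - a) * s = a + (b - a) * t"
      using dist_diff_profile_path by metis
    then show "s = t"
      using ab by simp
  qed
qed

lemma pathstart_profile_path: "pathstart (profile_path f a b) = coord_point a (f a)"
  by (simp add: pathstart_def profile_path_def)

lemma pathfinish_profile_path: "pathfinish (profile_path f a b) = coord_point b (f b)"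
  by (simp add: pathfinish_def profile_path_def)

end

lemma slender_side_profile_path:
  assumes "profile f"
  shows "slender_side (profile_path f (- d) d) x y"
  unfolding slender_side_def
proof (intro ballI impI)
  fix s t :: real assume s: "s \<in> {0..1}" and t: "t \<in> {0..1}" and "s \<le> t"
  define v w where "v = - d + (d - - d) * s" and "w = - d + (d - - d) * t"
  have "v \<le> w"
    using \<open>s \<le> t\<close> d_pos by (simp add: v_def w_def mult_left_mono)
  have "- d < d"
    using d_pos by simp
  then have "\<bar>v\<bar> \<le> d" "\<bar>w\<bar> \<le> d"
    using profile_path_param_bound[OF assms order.refl _ order.refl] s t by (auto simp: v_def w_def)
  then have "\<bar>f v - f w\<bar> \<le> \<bar>v - w\<bar>"
    using profile_lipschitz[OF assms] by (simp add: abs_le_iff)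
  then have "\<bar>\<bar>f v\<bar> - \<bar>f w\<bar>\<bar> \<le> w - v"
    using abs_triangle_ineq3[of "f v" "f w"] \<open>v \<le> w\<close> by simp
  then show "dist (profile_path f (- d) d s) x \<le> dist (profile_path f (- d) d t) x \<and>
      dist (profile_path f (- d) d t) y \<le> dist (profile_path f (- d) d s) y"
    unfolding profile_path_def v_def[symmetric] w_def[symmetric]
    using dist_coord_point[OF \<open>\<bar>v\<bar> \<le> d\<close>, of "f v"] dist_coord_point[OF \<open>\<bar>w\<bar> \<le> d\<close>, of "f w"]
    by (simp add: abs_le_iff)
qed

lemma path_image_profile_side: "profile f \<Longrightarrow> path_image (profile_path f (- d) d) = profile_graph f"
  using path_image_profile_path[of f "- d" d] d_pos by (simp add: profile_graph_def)

lemma segment_subset_region: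
  assumes "profile_pair L U"
  shows "closed_segment x y \<subseteq> region L U"
proof
  fix p assume "p \<in> closed_segment x y"
  then obtain t where t: "0 \<le> t" "t \<le> 1" and p: "p = (1 - t) *\<^sub>R x + t *\<^sub>R y"
    by (auto simp: closed_segment_def)
  have px: "p - x = t *\<^sub>R (y - x)" and py: "p - y = (1 - t) *\<^sub>R (x - y)"
    unfolding p by (simp_all add: algebra_simps)
  have "dist p x = t * d" "dist p y = (1 - t) * d"
    unfolding dist_norm px py using t by (simp_all add: d_def dist_norm norm_minus_commute)
  then have "p \<in> lens"
    using t d_pos mult_left_le_one_le[of d t] mult_left_le_one_le[of d "1 - t"]
    by (simp add: lens_def dist_commute)
  moreover have "height p = 0"
    by (simp add: height_def across_def px dx_def dy_def)
  ultimately show "p \<in> region L U"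
    using assms dist_diff_mem[of p] by (simp add: region_def profile_pair_def)
qed

lemma slender_adornment_region:
  assumes "profile_pair L U"
  shows "slender_adornment (region L U) x y"
proof -
  have U: "profile U" and L: "profile L"
    using assms by (auto simp: profile_pair_def)
  have "- d < d"
    using d_pos by simp
  have ends: "pathstart (profile_path f (- d) d) = x" "pathfinish (profile_path f (- d) d) = y"
    if "profile f" for f
    using pathstart_profile_path[OF that order.refl \<open>- d < d\<close> order.refl]
      pathfinish_profile_path[OF that order.refl \<open>- d < d\<close> order.refl]
      coord_point_left coord_point_right profile_ends[OF that] by auto
  have frontier: "frontier (region L U) = path_image (profile_path U (- d) d) \<union> path_image (profile_path L (- d) d)"
    unfolding frontier_region[OF assms] path_image_profile_side[OF U] path_image_profile_side[OF L] ..
  moreover have "x \<in> path_image (profile_path U (- d) d)" "y \<in> path_image (profile_path U (- d) d)"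
    using pathstart_in_path_image[of "profile_path U (- d) d"]
      pathfinish_in_path_image[of "profile_path U (- d) d"] ends[OF U] by simp_all
  ultimately have "x \<in> frontier (region L U)" "y \<in> frontier (region L U)"
    by blast+
  with frontier have "adornment_sides (region L U) x y (profile_path U (- d) d) (profile_path L (- d) d)"
    unfolding adornment_sides_def
    using compact_region[OF assms] simply_connected_region[OF assms] x_neq_y segment_subset_region[OF assms]
      arc_profile_path[OF U order.refl \<open>- d < d\<close> order.refl]
      arc_profile_path[OF L order.refl \<open>- d < d\<close> order.refl] ends[OF U] ends[OF L] frontier
    by blast
  then show ?thesis
    unfolding slender_adornment_def
    using slender_side_profile_path[OF U] slender_side_profile_path[OF L] by blast
qed

section \<open>Slender arcs are graphs of profiles\<close>

definition "slender_arc g \<longleftrightarrow> arc g \<and> pathstart g = x \<and> pathfinish g = y \<and> slender_side g x y"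

text \<open>Along a slender arc \<open>dist_diff\<close> is strictly increasing from \<open>-d\<close> to \<open>d\<close>,
  so it can be used as the parameter.\<close>
definition "arc_param g v = (SOME t. t \<in> {0..1} \<and> dist_diff (g t) = v)"

definition "profile_of g v = height (g (arc_param g v))"

context
  fixes g
  assumes g: "slender_arc g"
begin

lemma slender_arc_ends: "g 0 = x" "g 1 = y"
  using g by (simp_all add: slender_arc_def pathstart_def pathfinish_def)

lemma slender_arc_mono:
  assumes "s \<in> {0..1}" "t \<in> {0..1}" "s \<le> t"
  shows "dist (g s) x \<le> dist (g t) x" "dist (g t) y \<le> dist (g s) y"
  using g assms unfolding slender_arc_def slender_side_def by blast+

lemma slender_arc_in_lens:
  assumes "t \<in> {0..1}"
  shows "g t \<in> lens"
proof -
  have "dist (g t) x \<le> dist (g 1) x" "dist (g t) y \<le> dist (g 0) y"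
    using slender_arc_mono(1)[of t 1] slender_arc_mono(2)[of 0 t] assms by auto
  then show ?thesis
    using slender_arc_ends by (simp add: lens_def d_def dist_commute)
qed

lemma dist_diff_slender_arc_mono:
  assumes "s \<in> {0..1}" "t \<in> {0..1}" "s \<le> t"
  shows "dist_diff (g s) \<le> dist_diff (g t)"
  using slender_arc_mono[OF assms] unfolding dist_diff_def by linarith

lemma slender_arc_dists_const:
  assumes s: "s \<in> {0..1}" and t: "t \<in> {0..1}" and "s \<le> t"
    and eq: "dist_diff (g s) = dist_diff (g t)" and w: "w \<in> {s..t}"
  shows "dist (g w) x = dist (g s) x" "dist (g w) y = dist (g s) y"
proof -
  have st: "dist (g t) x = dist (g s) x" "dist (g t) y = dist (g s) y"
    using slender_arc_mono[OF s t \<open>s \<le> t\<close>] eq unfolding dist_diff_def by auto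
  have "w \<in> {0..1}" "s \<le> w" "w \<le> t"
    using w s t by auto
  then have "dist (g s) x \<le> dist (g w) x" "dist (g w) x \<le> dist (g t) x"
    "dist (g w) y \<le> dist (g s) y" "dist (g t) y \<le> dist (g w) y"
    using slender_arc_mono[OF s] slender_arc_mono[OF _ t] by auto
  then show "dist (g w) x = dist (g s) x" "dist (g w) y = dist (g s) y"
    using st by linarith+
qed

text \<open>If \<open>dist_diff\<close> were constant on \<open>[s, t]\<close>, both distances would be, and the arc would
  visit at most three points there, contradicting injectivity.\<close>
lemma dist_diff_slender_arc_strict_mono:
  assumes s: "s \<in> {0..1}" and t: "t \<in> {0..1}" and "s < t"
  shows "dist_diff (g s) < dist_diff (g t)"
proof (rule ccontr)
  assume "\<not> ?thesis"
  then have "dist_diff (g s) = dist_diff (g t)"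
    using dist_diff_slender_arc_mono[OF s t] \<open>s < t\<close> by simp
  note const = slender_arc_dists_const[OF s t less_imp_le[OF \<open>s < t\<close>] this]
  define c where "c = dist (g s) x + dist (g s) y - d"
  have "g ` {s..t} \<subseteq> coord_point (dist_diff (g s)) ` {- c, 0, c}"
  proof
    fix q assume "q \<in> g ` {s..t}"
    then obtain w where w: "w \<in> {s..t}" "q = g w"
      by auto
    then have "w \<in> {0..1}"
      using s t by auto
    have "dist_diff q = dist_diff (g s)" "dist_sum q = c + d"
      using const[OF w(1)] w(2) by (simp_all add: dist_diff_def dist_sum_def c_def)
    then have q: "q = coord_point (dist_diff (g s)) (height q)"
      using coord_point_coords_lens[OF slender_arc_in_lens[OF \<open>w \<in> {0..1}\<close>]] w(2) by simp
    have "height q \<in> {- c, 0, c}"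
      using \<open>dist_sum q = c + d\<close> by (simp add: height_def sgn_if)
    then show "q \<in> coord_point (dist_diff (g s)) ` {- c, 0, c}"
      by (subst q) (rule imageI)
  qed
  then have "finite (g ` {s..t})"
    by (rule finite_subset) simp
  moreover have "inj_on g {s..t}"
    using g s t by (auto simp: slender_arc_def arc_def intro: inj_on_subset)
  ultimately have "finite {s..t}"
    by (rule finite_imageD)
  then show False
    using infinite_Icc[OF \<open>s < t\<close>] by simp
qed

lemma path_slender_arc: "path g"
  using g by (simp add: slender_arc_def arc_def)

lemma continuous_on_slender_arc: "continuous_on {0..1} g"
  using path_slender_arc by (simp add: path_def)

lemma dist_diff_slender_arc_surj:
  assumes "v \<in> {-d..d}"
  shows "\<exists>t\<in>{0..1}. dist_diff (g t) = v"
proof -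
  have "continuous_on {0..1} (\<lambda>t. dist_diff (g t))"
    by (intro continuous_on_compose2[OF continuous_on_dist_diff continuous_on_slender_arc]) auto
  moreover have "dist_diff (g 0) \<le> v" "v \<le> dist_diff (g 1)"
    using assms slender_arc_ends dist_diff_x dist_diff_y by auto
  ultimately show ?thesis
    using IVT'[of "\<lambda>t. dist_diff (g t)" 0 v 1] by auto
qed

lemma arc_param:
  assumes "v \<in> {-d..d}"
  shows "arc_param g v \<in> {0..1}" "dist_diff (g (arc_param g v)) = v"
  using someI_ex[OF dist_diff_slender_arc_surj[OF assms, unfolded Bex_def]]
  unfolding arc_param_def by auto

lemma arc_param_dist_diff:
  assumes "t \<in> {0..1}"
  shows "arc_param g (dist_diff (g t)) = t"
  using arc_param[OF dist_diff_mem] assms dist_diff_slender_arc_strict_mono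
  by (metis linorder_neqE_linordered_idom less_irrefl)

lemma arc_param_mono:
  assumes "v \<in> {-d..d}" "w \<in> {-d..d}" "v \<le> w"
  shows "arc_param g v \<le> arc_param g w"
  using dist_diff_slender_arc_strict_mono[OF arc_param(1)[OF assms(2)] arc_param(1)[OF assms(1)]]
    arc_param(2)[OF assms(1)] arc_param(2)[OF assms(2)] assms(3)
  by fastforce

lemma abs_height_slender_arc: "t \<in> {0..1} \<Longrightarrow> \<bar>height (g t)\<bar> = dist_sum (g t) - d"
  using abs_height lens_across_or_dist_sum slender_arc_in_lens by blast

text \<open>Within one half-plane this is the slenderness of the arc; an arc crossing the line \<open>xy\<close>
  meets it at a point of height \<open>0\<close> in between.\<close>
lemma height_slender_arc_step:
  assumes s: "s \<in> {0..1}" and t: "t \<in> {0..1}" and "s \<le> t"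
  shows "\<bar>height (g t) - height (g s)\<bar> \<le> dist_diff (g t) - dist_diff (g s)"
proof -
  have abs_step: "\<bar>\<bar>height (g t')\<bar> - \<bar>height (g s')\<bar>\<bar> \<le> dist_diff (g t') - dist_diff (g s')"
    if "s' \<in> {0..1}" "t' \<in> {0..1}" "s' \<le> t'" for s' t'
    using abs_height_slender_arc[OF that(1)] abs_height_slender_arc[OF that(2)] slender_arc_mono[OF that]
    unfolding dist_sum_def dist_diff_def by linarith
  show ?thesis
  proof (cases "height (g s) * height (g t) \<ge> 0")
    case True
    then have "\<bar>height (g t) - height (g s)\<bar> = \<bar>\<bar>height (g t)\<bar> - \<bar>height (g s)\<bar>\<bar>"
      by (auto simp: zero_le_mult_iff)
    then show ?thesis
      using abs_step[OF s t \<open>s \<le> t\<close>] by simp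
  next
    case False
    have "continuous_on {0..1} (\<lambda>w. across (g w))"
      by (intro continuous_on_compose2[OF continuous_on_across continuous_on_slender_arc]) auto
    then have "continuous_on {s..t} (\<lambda>w. across (g w))"
      by (rule continuous_on_subset) (use s t in auto)
    moreover have sgn_eq: "sgn (across q) = sgn (height q)" if "height q \<noteq> 0" for q
      using that dist_sum_ge[of q] by (auto simp: height_def sgn_mult sgn_if)
    have "height (g s) \<noteq> 0" "height (g t) \<noteq> 0"
      using False by auto
    then have "sgn (across (g s) * across (g t)) = sgn (height (g s) * height (g t))"
      using sgn_eq by (simp add: sgn_mult)
    then have "across (g s) * across (g t) < 0"
      using False sgn_less[of "across (g s) * across (g t)"] sgn_less[of "height (g s) * height (g t)"]
      by simp
    ultimately obtain w where w: "s \<le> w" "w \<le> t" "across (g w) = 0"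
      using IVT'[of "\<lambda>w. across (g w)" s 0 t] IVT2'[of "\<lambda>w. across (g w)" t 0 s] \<open>s \<le> t\<close>
      by (auto simp: mult_less_0_iff)
    then have "w \<in> {0..1}" "height (g w) = 0"
      using s t by (auto simp: height_def)
    then show ?thesis
      using abs_step[OF s \<open>w \<in> {0..1}\<close> w(1)] abs_step[OF \<open>w \<in> {0..1}\<close> t w(2)] by linarith
  qed
qed

lemma profile_profile_of: "profile (profile_of g)"
proof (rule profileI)
  have step: "\<bar>profile_of g w - profile_of g v\<bar> \<le> w - v"
    if "v \<in> {-d..d}" "w \<in> {-d..d}" "v \<le> w" for v w
    using height_slender_arc_step[OF arc_param(1)[OF that(1)] arc_param(1)[OF that(2)] arc_param_mono[OF that]]
    by (simp add: profile_of_def arc_param(2)[OF that(1)] arc_param(2)[OF that(2)])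
  fix v w assume "v \<in> {-d..d}" "w \<in> {-d..d}"
  then show "\<bar>profile_of g v - profile_of g w\<bar> \<le> \<bar>v - w\<bar>"
    using step[of v w] step[of w v] by (cases "v \<le> w") (simp_all add: abs_minus_commute)
next
  have "arc_param g (- d) = 0" "arc_param g d = 1"
    using arc_param_dist_diff[of 0] arc_param_dist_diff[of 1] slender_arc_ends dist_diff_x dist_diff_y
    by simp_all
  then show "profile_of g (- d) = 0" "profile_of g d = 0"
    by (simp_all add: profile_of_def slender_arc_ends height_x height_y)
qed

lemma path_image_slender_arc: "path_image g = profile_graph (profile_of g)"
proof
  show "path_image g \<subseteq> profile_graph (profile_of g)"
  proof
    fix q assume "q \<in> path_image g"
    then obtain t where t: "t \<in> {0..1}" "q = g t"
      by (auto simp: path_image_def)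
    then have "q = coord_point (dist_diff (g t)) (profile_of g (dist_diff (g t)))"
      using coord_point_coords_lens[OF slender_arc_in_lens] arc_param_dist_diff by (simp add: profile_of_def)
    then show "q \<in> profile_graph (profile_of g)"
      unfolding profile_graph_def using dist_diff_mem by blast
  qed
  show "profile_graph (profile_of g) \<subseteq> path_image g"
  proof
    fix q assume "q \<in> profile_graph (profile_of g)"
    then obtain v where v: "v \<in> {-d..d}" "q = coord_point v (profile_of g v)"
      by (auto simp: profile_graph_def)
    then have "q = g (arc_param g v)"
      using coord_point_coords_lens[OF slender_arc_in_lens[OF arc_param(1)]] arc_param(2)
      by (simp add: profile_of_def)
    then show "q \<in> path_image g"
      unfolding path_image_def using arc_param(1)[OF v(1)] by blast
  qed
qed

end

section \<open>Slender adornments are regions between profiles\<close>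

lemma vertical_ray_meets_frontier:
  assumes "compact S" and "\<bar>v\<bar> \<le> d" and "coord_point v h \<in> S" and "\<bar>\<sigma>\<bar> = 1"
  shows "\<exists>t\<ge>0. coord_point v (h + \<sigma> * t) \<in> frontier S"
proof -
  define R where "R = (\<lambda>t. coord_point v (h + \<sigma> * t)) ` {0..}"
  have "connected R"
    unfolding R_def by (intro connected_continuous_image continuous_intros convex_connected convex_real_interval)
  moreover have "R \<inter> S \<noteq> {}"
    using assms(3) unfolding R_def by force
  moreover have "\<not> R \<subseteq> S"
  proof
    assume "R \<subseteq> S"
    then obtain e where e: "\<And>q. q \<in> R \<Longrightarrow> dist q x \<le> e"
      using compact_imp_bounded[OF assms(1)] bounded_subset bounded_any_center by (metis dist_commute)
    define t where "t = 2 * \<bar>e\<bar> + 2 * \<bar>h\<bar> + 2 * d"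
    have "t \<ge> 0"
      using d_pos by (simp add: t_def)
    then have "dist (coord_point v (h + \<sigma> * t)) x \<le> e"
      by (intro e) (auto simp: R_def)
    moreover have "\<bar>h + \<sigma> * t\<bar> \<ge> t - \<bar>h\<bar>"
      using assms(4) \<open>t \<ge> 0\<close> abs_triangle_ineq2[of "\<sigma> * t" "- h"] by (simp add: abs_mult)
    moreover have "- d \<le> v"
      using assms(2) by (simp add: abs_le_iff)
    ultimately show False
      using dist_coord_point(1)[OF assms(2), of "h + \<sigma> * t"] t_def abs_ge_self[of e] abs_ge_zero[of h] d_pos
      by argo
  qed
  ultimately have "R \<inter> frontier S \<noteq> {}"
    using connected_Int_frontier by blast
  then show ?thesis
    by (auto simp: R_def)
qed

lemma profiles_strict_interval:
  assumes f: "profile f" and g: "profile g" and v: "v \<in> {-d..d}" and "f v < g v"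
  obtains a b where "- d \<le> a" "a < v" "v < b" "b \<le> d" "f a = g a" "f b = g b"
    "\<And>w. a < w \<Longrightarrow> w < b \<Longrightarrow> f w < g w"
proof -
  define D where "D w = g w - f w" for w
  have D: "continuous_on {-d..d} D"
    unfolding D_def using continuous_on_profile[OF f] continuous_on_profile[OF g]
    by (intro continuous_intros)
  have ends: "D (- d) = 0" "D d = 0" "0 < D v"
    using profile_ends[OF f] profile_ends[OF g] \<open>f v < g v\<close> by (simp_all add: D_def)
  obtain a where a: "a \<in> {-d..<v}" "D a = 0" "\<forall>w\<in>{a<..v}. 0 < D w"
    using last_zero_before[of "- d" v D] v ends continuous_on_subset[OF D, of "{-d..v}"] by auto
  obtain b where b: "b \<in> {v<..d}" "D b = 0" "\<forall>w\<in>{v..<b}. 0 < D w"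
    using first_zero_after[of v d D] v ends continuous_on_subset[OF D, of "{v..d}"] by auto
  have "f w < g w" if "a < w" "w < b" for w
    using a(3) b(3) that by (cases "w \<le> v") (auto simp: D_def)
  then show ?thesis
    using that a b by (auto simp: D_def)
qed

definition "profile_loop f g a b = profile_path f a b +++ reversepath (profile_path g a b)"

definition "lune f g a b = ball x d \<inter> ball y d \<inter>
  {q. a < dist_diff q \<and> dist_diff q < b \<and> f (dist_diff q) < height q \<and> height q < g (dist_diff q)}"

context
  fixes f g a b
  assumes f: "profile f" and g: "profile g" and ab: "- d \<le> a" "a < b" "b \<le> d"
    and meet: "f a = g a" "f b = g b" and below: "\<And>w. a < w \<Longrightarrow> w < b \<Longrightarrow> f w < g w"
begin

lemma path_image_profile_loop:
  "path_image (profile_loop f g a b) = (\<lambda>w. coord_point w (f w)) ` {a..b} \<union> (\<lambda>w. coord_point w (g w)) ` {a..b}"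
  unfolding profile_loop_def
  using path_image_join[of "profile_path f a b" "reversepath (profile_path g a b)"]
    path_image_profile_path[OF f ab] path_image_profile_path[OF g ab]
    pathfinish_profile_path[OF f ab] pathfinish_profile_path[OF g ab] meet
  by simp

lemma closed_profile_loop: "pathfinish (profile_loop f g a b) = pathstart (profile_loop f g a b)"
  unfolding profile_loop_def
  using pathstart_profile_path[OF f ab] pathstart_profile_path[OF g ab] meet by simp

lemma simple_path_profile_loop: "simple_path (profile_loop f g a b)"
  unfolding profile_loop_def
proof (rule simple_path_join_loop)
  show "arc (profile_path f a b)" "arc (reversepath (profile_path g a b))"
    using arc_profile_path[OF f ab] arc_reversepath[OF arc_profile_path[OF g ab]] by simp_all
  show "pathfinish (profile_path f a b) = pathstart (reversepath (profile_path g a b))"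
    "pathfinish (reversepath (profile_path g a b)) = pathstart (profile_path f a b)"
    using pathstart_profile_path[OF f ab] pathstart_profile_path[OF g ab]
      pathfinish_profile_path[OF f ab] pathfinish_profile_path[OF g ab] meet by simp_all
  show "path_image (profile_path f a b) \<inter> path_image (reversepath (profile_path g a b))
      \<subseteq> {pathstart (profile_path f a b), pathstart (reversepath (profile_path g a b))}"
  proof
    fix q assume "q \<in> path_image (profile_path f a b) \<inter> path_image (reversepath (profile_path g a b))"
    then obtain w w' where w: "w \<in> {a..b}" "w' \<in> {a..b}" "q = coord_point w (f w)" "q = coord_point w' (g w')"
      using path_image_profile_path[OF f ab] path_image_profile_path[OF g ab] by auto
    then have "w \<in> {-d..d}" "w' \<in> {-d..d}"
      using ab by auto
    then have "\<bar>w\<bar> \<le> d" "\<bar>w'\<bar> \<le> d" "\<bar>w\<bar> < d \<or> f w = 0" "\<bar>w'\<bar> < d \<or> g w' = 0"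
      using profile_at_end[OF f] profile_at_end[OF g] by (auto simp: abs_le_iff)
    then have "w = w' \<and> f w = g w'"
      using w(3,4) coord_point_eq_iff by metis
    then have "w = a \<or> w = b"
      using w(1) below[of w] by force
    then show "q \<in> {pathstart (profile_path f a b), pathstart (reversepath (profile_path g a b))}"
      using w(3) pathstart_profile_path[OF f ab] pathfinish_profile_path[OF g ab] meet by auto
  qed
qed

lemma open_lune: "open (lune f g a b)"
proof -
  let ?F = "\<lambda>q. (dist_diff q, height q - f (dist_diff q), g (dist_diff q) - height q)"
  have "continuous_on lens ?F"
    using continuous_on_height f g
    by (intro continuous_intros continuous_on_compose2[OF continuous_on_profile continuous_on_dist_diff])
      (auto simp: dist_diff_bounds)
  then have "continuous_on (ball x d \<inter> ball y d) ?F"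
    by (rule continuous_on_subset) (auto simp: lens_def)
  moreover have "lune f g a b = (ball x d \<inter> ball y d) \<inter> ?F -` ({a<..<b} \<times> {0<..} \<times> {0<..})"
    by (auto simp: lune_def)
  ultimately show ?thesis
    by (auto intro!: continuous_open_preimage open_Times)
qed

lemma bounded_lune: "bounded (lune f g a b)"
  by (rule bounded_subset[of "ball x d"]) (auto simp: lune_def)

lemma frontier_lune_subset: "frontier (lune f g a b) \<subseteq> path_image (profile_loop f g a b)"
proof
  let ?C = "lens \<inter> {q. a \<le> dist_diff q \<and> dist_diff q \<le> b \<and> f (dist_diff q) \<le> height q \<and> height q \<le> g (dist_diff q)}"
  fix q assume q: "q \<in> frontier (lune f g a b)"
  have "continuous_on lens (\<lambda>q. (dist_diff q, height q - f (dist_diff q), g (dist_diff q) - height q))"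
    using continuous_on_height f g
    by (intro continuous_intros continuous_on_compose2[OF continuous_on_profile continuous_on_dist_diff])
      (auto simp: dist_diff_bounds)
  moreover have "?C = lens \<inter> (\<lambda>q. (dist_diff q, height q - f (dist_diff q), g (dist_diff q) - height q)) -`
      ({a..b} \<times> {0..} \<times> {0..})"
    by auto
  ultimately have "closed ?C"
    by (auto intro!: continuous_closed_preimage closed_Times compact_imp_closed[OF compact_lens])
  moreover have "lune f g a b \<subseteq> ?C"
    by (auto simp: lune_def lens_def)
  ultimately have "closure (lune f g a b) \<subseteq> ?C"
    by (rule closure_minimal[rotated])
  then have "q \<in> ?C" "q \<notin> lune f g a b"
    using q open_lune by (auto simp: frontier_def interior_open)
  then have ql: "q \<in> lens" and qv: "dist_diff q \<in> {a..b}"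
    and qh: "f (dist_diff q) \<le> height q" "height q \<le> g (dist_diff q)"
    by auto
  have "height q = f (dist_diff q) \<or> height q = g (dist_diff q)"
  proof (rule ccontr)
    assume "\<not> ?thesis"
    then have "f (dist_diff q) < height q" "height q < g (dist_diff q)"
      using qh by auto
    moreover have "dist_diff q \<noteq> a" "dist_diff q \<noteq> b"
      using calculation meet by auto
    ultimately have "q \<in> lune f g a b"
      using qv between_profiles_in_balls[OF f g ql] by (auto simp: lune_def)
    then show False
      using \<open>q \<notin> lune f g a b\<close> by blast
  qed
  then show "q \<in> path_image (profile_loop f g a b)"
    unfolding path_image_profile_loop using coord_point_coords_lens[OF ql] qv by force
qed

lemma lune_subset_inside_profile_loop: "lune f g a b \<subseteq> inside (path_image (profile_loop f g a b))"
proof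
  fix q assume q: "q \<in> lune f g a b"
  then have "\<bar>dist_diff q\<bar> < d" "f (dist_diff q) < height q" "height q < g (dist_diff q)"
    using ab by (auto simp: lune_def)
  have "q \<noteq> coord_point w (k w)" if "w \<in> {a..b}" and k: "k = f \<or> k = g" for w k
  proof
    assume q_eq: "q = coord_point w (k w)"
    have "w \<in> {-d..d}"
      using that ab by auto
    then have "\<bar>w\<bar> \<le> d" "\<bar>w\<bar> < d \<or> k w = 0"
      using k profile_at_end[OF f] profile_at_end[OF g] by (auto simp: abs_le_iff)
    then have "dist_diff q = w" "height q = k w"
      unfolding q_eq by (simp_all add: dist_diff_coord_point height_coord_point)
    then show False
      using k \<open>f (dist_diff q) < height q\<close> \<open>height q < g (dist_diff q)\<close> by auto
  qed
  then have "q \<notin> path_image (profile_loop f g a b)"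
    unfolding path_image_profile_loop by blast
  then show "q \<in> inside (path_image (profile_loop f g a b))"
    using inside_if_frontier_subset[OF bounded_lune frontier_lune_subset] q open_lune
    by (simp add: interior_open)
qed

end

lemma profile_graph_subset_lens:
  assumes "profile f"
  shows "profile_graph f \<subseteq> lens"
proof
  fix q assume "q \<in> profile_graph f"
  then obtain v where v: "v \<in> {-d..d}" "q = coord_point v (f v)"
    by (auto simp: profile_graph_def)
  have "\<bar>v\<bar> \<le> d"
    using v(1) by (simp add: abs_le_iff)
  then show "q \<in> lens"
    unfolding v(2) using coord_point_in_lens_iff abs_profile_le[OF assms v(1)] by blast
qed

lemma between_profiles_in_simply_connected:
  assumes f: "profile f" and g: "profile g" and "simply_connected S"
    and "profile_graph f \<subseteq> S" and "profile_graph g \<subseteq> S"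
    and v: "v \<in> {-d..d}" and h: "f v < h" "h < g v"
  shows "coord_point v h \<in> S"
proof -
  have "f v < g v"
    using h by linarith
  then obtain a b where ab: "- d \<le> a" "a < v" "v < b" "b \<le> d" and meet: "f a = g a" "f b = g b"
    and below: "\<And>w. a < w \<Longrightarrow> w < b \<Longrightarrow> f w < g w"
    using profiles_strict_interval[OF f g v] by blast
  have "a < b"
    using ab by linarith
  note loop = f g \<open>- d \<le> a\<close> \<open>a < b\<close> \<open>b \<le> d\<close> meet below
  have "\<bar>v\<bar> < d"
    using ab by auto
  moreover have "\<bar>h\<bar> \<le> d - \<bar>v\<bar>"
    using h abs_profile_le[OF f v] abs_profile_le[OF g v] by auto
  ultimately have "coord_point v h \<in> lens" "dist_diff (coord_point v h) = v" "height (coord_point v h) = h"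
    using coord_point_in_lens_iff dist_diff_coord_point height_coord_point by simp_all
  then have "coord_point v h \<in> lune f g a b"
    using ab h between_profiles_in_balls[OF f g] by (auto simp: lune_def)
  then have "coord_point v h \<in> inside (path_image (profile_loop f g a b))"
    using lune_subset_inside_profile_loop[OF loop] by blast
  moreover have "{a..b} \<subseteq> {-d..d}"
    using ab by auto
  then have "path_image (profile_loop f g a b) \<subseteq> profile_graph f \<union> profile_graph g"
    using path_image_profile_loop[OF loop] unfolding profile_graph_def by blast
  then have "path_image (profile_loop f g a b) \<subseteq> S"
    using assms(4,5) by blast
  moreover have "DIM(real^2) = 2"
    by simp
  ultimately show ?thesis
    using simply_connected_inside_simple_loop[OF _ \<open>simply_connected S\<close> simple_path_profile_loop[OF loop]
        closed_profile_loop[OF loop]]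
    by blast
qed

context
  fixes S f g
  assumes S: "compact S" and f: "profile f" and g: "profile g"
    and frontier_S: "frontier S = profile_graph f \<union> profile_graph g"
begin

lemma coord_point_notin_frontier:
  assumes "\<bar>w\<bar> < d" and "h \<noteq> f w" and "h \<noteq> g w"
  shows "coord_point w h \<notin> frontier S"
proof
  assume "coord_point w h \<in> frontier S"
  then obtain k w' where k: "k = f \<or> k = g" and w': "w' \<in> {-d..d}" "coord_point w h = coord_point w' (k w')"
    unfolding frontier_S profile_graph_def by blast
  have "\<bar>w'\<bar> \<le> d" "\<bar>w'\<bar> < d \<or> k w' = 0"
    using w'(1) k profile_at_end[OF f] profile_at_end[OF g] by (auto simp: abs_le_iff)
  then have "w = w' \<and> h = k w'"
    using w'(2) coord_point_eq_iff[of w w' h "k w'"] assms(1) by simp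
  then show False
    using assms k by auto
qed

text \<open>A vertical ray leaving \<open>S\<close> must cross a side.\<close>
lemma min_le_height_le_max:
  assumes "\<bar>v\<bar> < d" and "coord_point v h \<in> S"
  shows "min (f v) (g v) \<le> h \<and> h \<le> max (f v) (g v)"
proof -
  have no_cross: False
    if "\<bar>\<sigma>\<bar> = 1" and "\<And>t. 0 \<le> t \<Longrightarrow> h + \<sigma> * t \<noteq> f v \<and> h + \<sigma> * t \<noteq> g v" for \<sigma>
    using vertical_ray_meets_frontier[OF S _ assms(2) that(1)] coord_point_notin_frontier[OF assms(1)] that(2)
      assms(1) by fastforce
  show ?thesis
  proof (intro conjI; rule ccontr)
    assume "\<not> min (f v) (g v) \<le> h"
    then have "h + (- 1) * t \<noteq> f v \<and> h + (- 1) * t \<noteq> g v" if "0 \<le> t" for t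
      using that by auto
    then show False
      using no_cross[of "- 1"] by simp
  next
    assume "\<not> h \<le> max (f v) (g v)"
    then have "h + 1 * t \<noteq> f v \<and> h + 1 * t \<noteq> g v" if "0 \<le> t" for t
      using that by auto
    then show False
      using no_cross[of 1] by simp
  qed
qed

lemma profile_pair_min_max:
  assumes "closed_segment x y \<subseteq> S"
  shows "profile_pair (\<lambda>v. min (f v) (g v)) (\<lambda>v. max (f v) (g v))"
proof -
  have "min (f v) (g v) \<le> 0 \<and> 0 \<le> max (f v) (g v)" if v: "v \<in> {-d..d}" for v
  proof (cases "\<bar>v\<bar> < d")
    case True
    then have "coord_point v 0 \<in> S"
      using coord_point_0_mem_segment assms by fastforce
    then show ?thesis
      using min_le_height_le_max[OF True] by blast
  next
    case False
    then have "f v = 0" "g v = 0"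
      using profile_at_end[OF f v] profile_at_end[OF g v] by auto
    then show ?thesis
      by simp
  qed
  then show ?thesis
    unfolding profile_pair_def using profile_min[OF f g] profile_max[OF f g] by blast
qed

lemma frontier_subset_lens: "frontier S \<subseteq> lens"
  using profile_graph_subset_lens[OF f] profile_graph_subset_lens[OF g] frontier_S by blast

lemma ends_in_frontier: "x \<in> frontier S" "y \<in> frontier S"
proof -
  have "coord_point (- d) (f (- d)) = x" "coord_point d (f d) = y"
    using coord_point_left coord_point_right profile_ends[OF f] by simp_all
  moreover have "- d \<in> {-d..d}" "d \<in> {-d..d}"
    using d_pos by auto
  ultimately show "x \<in> frontier S" "y \<in> frontier S"
    unfolding frontier_S profile_graph_def by (metis UnI1 image_eqI)+
qed

text \<open>A point of \<open>S\<close> on the line \<open>xy\<close> beyond \<open>x\<close> or \<open>y\<close> would be interior, but the ray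
  continuing away from the segment never meets the lens, hence never the frontier.\<close>
lemma abs_dist_diff_less_off_frontier: "p \<in> S \<Longrightarrow> p \<notin> frontier S \<Longrightarrow> \<bar>dist_diff p\<bar> < d"
proof (rule ccontr)
  assume p: "p \<in> S" "p \<notin> frontier S" and "\<not> \<bar>dist_diff p\<bar> < d"
  then have v: "\<bar>dist_diff p\<bar> = d"
    using abs_dist_diff_le[of p] by simp
  have "dist_sum p \<noteq> d"
  proof
    assume "dist_sum p = d"
    then have "dist p x + dist p y = d" "\<bar>dist p x - dist p y\<bar> = d"
      using v by (simp_all add: dist_sum_def dist_diff_def)
    then have "dist p x = 0 \<or> dist p y = 0"
      by arith
    then show False
      using p(2) ends_in_frontier by auto
  qed
  then have "dist_sum p - d > 0"
    using dist_sum_ge[of p] by simp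
  obtain t where "t \<ge> 0" "coord_point (dist_diff p) (dist_sum p - d + 1 * t) \<in> frontier S"
    using vertical_ray_meets_frontier[OF S _ _, of "dist_diff p" "dist_sum p - d" 1] v p(1)
      coord_point_beyond[OF v] by auto
  moreover have "coord_point (dist_diff p) (dist_sum p - d + 1 * t) \<notin> lens"
    using coord_point_in_lens_iff[of "dist_diff p"] v \<open>t \<ge> 0\<close> \<open>dist_sum p - d > 0\<close> by simp
  ultimately show False
    using frontier_subset_lens by blast
qed

lemma subset_region_min_max:
  assumes "closed_segment x y \<subseteq> S"
  shows "S \<subseteq> region (\<lambda>v. min (f v) (g v)) (\<lambda>v. max (f v) (g v))"
proof
  fix p assume p: "p \<in> S"
  show "p \<in> region (\<lambda>v. min (f v) (g v)) (\<lambda>v. max (f v) (g v))"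
  proof (cases "p \<in> frontier S")
    case True
    then obtain k w where k: "k = f \<or> k = g" and w: "w \<in> {-d..d}" "p = coord_point w (k w)"
      unfolding frontier_S profile_graph_def by blast
    then show ?thesis
      using coord_point_in_region[OF profile_pair_min_max[OF assms] w(1)] by auto
  next
    case False
    then have "\<bar>dist_diff p\<bar> < d"
      using abs_dist_diff_less_off_frontier p by blast
    then have "coord_point (dist_diff p) (height p) = p"
      by (rule coord_point_coords_strip)
    then show ?thesis
      using coord_point_in_region[OF profile_pair_min_max[OF assms] dist_diff_mem]
        min_le_height_le_max[OF \<open>\<bar>dist_diff p\<bar> < d\<close>] p by metis
  qed
qed

lemma region_min_max_subset:
  assumes "simply_connected S" and "closed_segment x y \<subseteq> S"
  shows "region (\<lambda>v. min (f v) (g v)) (\<lambda>v. max (f v) (g v)) \<subseteq> S"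
proof
  fix p assume p: "p \<in> region (\<lambda>v. min (f v) (g v)) (\<lambda>v. max (f v) (g v))"
  define v h where "v = dist_diff p" and "h = height p"
  have v: "v \<in> {-d..d}" and p_eq: "p = coord_point v h"
    using p coord_point_coords_lens dist_diff_mem by (auto simp: region_def v_def h_def)
  have graphs: "profile_graph f \<subseteq> S" "profile_graph g \<subseteq> S"
    using frontier_subset_closed[OF compact_imp_closed[OF S]] frontier_S by auto
  consider "h = f v \<or> h = g v" | "f v < h" "h < g v" | "g v < h" "h < f v"
    using p by (fastforce simp: region_def v_def h_def)
  then show "p \<in> S"
  proof cases
    case 1
    then have "p \<in> profile_graph f \<union> profile_graph g"
      using v p_eq by (auto simp: profile_graph_def)
    then show ?thesis
      using graphs by blast
  next
    case 2
    then show ?thesis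
      using between_profiles_in_simply_connected[OF f g assms(1) graphs v] p_eq by simp
  next
    case 3
    then show ?thesis
      using between_profiles_in_simply_connected[OF g f assms(1) graphs(2,1) v] p_eq by simp
  qed
qed

end

lemma slender_adornment_imp_region:
  assumes "slender_adornment S x y"
  shows "\<exists>L U. profile_pair L U \<and> S = region L U"
proof -
  obtain g1 g2 where S: "adornment_sides S x y g1 g2" and "slender_side g1 x y" "slender_side g2 x y"
    using assms by (auto simp: slender_adornment_def)
  then have g: "slender_arc g1" "slender_arc g2"
    by (auto simp: slender_arc_def adornment_sides_def)
  have frontier: "frontier S = profile_graph (profile_of g1) \<union> profile_graph (profile_of g2)"
    using S path_image_slender_arc[OF g(1)] path_image_slender_arc[OF g(2)] by (simp add: adornment_sides_def)
  have "compact S" "simply_connected S" "closed_segment x y \<subseteq> S"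
    using S by (simp_all add: adornment_sides_def)
  note char = \<open>compact S\<close> profile_profile_of[OF g(1)] profile_profile_of[OF g(2)] frontier
  have "S = region (\<lambda>v. min (profile_of g1 v) (profile_of g2 v)) (\<lambda>v. max (profile_of g1 v) (profile_of g2 v))"
    using subset_region_min_max[OF char \<open>closed_segment x y \<subseteq> S\<close>]
      region_min_max_subset[OF char \<open>simply_connected S\<close> \<open>closed_segment x y \<subseteq> S\<close>] by blast
  then show ?thesis
    using profile_pair_min_max[OF char \<open>closed_segment x y \<subseteq> S\<close>] by blast
qed

lemma slender_adornment_iff_region:
  "slender_adornment S x y \<longleftrightarrow> (\<exists>L U. profile_pair L U \<and> S = region L U)"
  using slender_adornment_imp_region slender_adornment_region by blast

section \<open>Unions and intersections\<close>

lemma profile_pair_Un: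
  assumes "profile_pair L1 U1" and "profile_pair L2 U2"
  shows "profile_pair (\<lambda>v. min (L1 v) (L2 v)) (\<lambda>v. max (U1 v) (U2 v))"
  using assms profile_min profile_max by (fastforce simp: profile_pair_def)

lemma region_Un:
  assumes "profile_pair L1 U1" and "profile_pair L2 U2"
  shows "region L1 U1 \<union> region L2 U2 = region (\<lambda>v. min (L1 v) (L2 v)) (\<lambda>v. max (U1 v) (U2 v))"
proof
  show "region L1 U1 \<union> region L2 U2 \<subseteq> region (\<lambda>v. min (L1 v) (L2 v)) (\<lambda>v. max (U1 v) (U2 v))"
    by (auto simp: region_def)
  show "region (\<lambda>v. min (L1 v) (L2 v)) (\<lambda>v. max (U1 v) (U2 v)) \<subseteq> region L1 U1 \<union> region L2 U2"
  proof
    fix p assume p: "p \<in> region (\<lambda>v. min (L1 v) (L2 v)) (\<lambda>v. max (U1 v) (U2 v))"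
    have "L1 (dist_diff p) \<le> 0 \<and> 0 \<le> U1 (dist_diff p)" "L2 (dist_diff p) \<le> 0 \<and> 0 \<le> U2 (dist_diff p)"
      using assms profile_pair_bounds dist_diff_mem by blast+
    then show "p \<in> region L1 U1 \<union> region L2 U2"
      using p by (cases "0 \<le> height p") (auto simp: region_def min_def max_def split: if_splits)
  qed
qed

lemma profile_SUP:
  assumes "I \<noteq> {}" and "\<And>i. i \<in> I \<Longrightarrow> profile (f i)"
  shows "profile (\<lambda>v. SUP i\<in>I. f i v)"
proof (rule profileI)
  have bdd: "bdd_above ((\<lambda>i. f i v) ` I)" if "v \<in> {-d..d}" for v
    using assms(2) abs_profile_le[OF _ that] by (intro bdd_aboveI[of _ d]) (force simp: abs_le_iff)
  have le: "(SUP i\<in>I. f i v) \<le> (SUP i\<in>I. f i w) + \<bar>v - w\<bar>"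
    if "v \<in> {-d..d}" "w \<in> {-d..d}" for v w
  proof (rule cSUP_least[OF assms(1)])
    fix i assume i: "i \<in> I"
    have "f i v \<le> f i w + \<bar>v - w\<bar>" "f i w \<le> (SUP i\<in>I. f i w)"
      using profile_lipschitz[OF assms(2)[OF i] that] cSUP_upper[OF i bdd[OF that(2)]]
      by (auto simp: abs_le_iff)
    then show "f i v \<le> (SUP i\<in>I. f i w) + \<bar>v - w\<bar>"
      by linarith
  qed
  fix v w assume "v \<in> {-d..d}" "w \<in> {-d..d}"
  then show "\<bar>(SUP i\<in>I. f i v) - (SUP i\<in>I. f i w)\<bar> \<le> \<bar>v - w\<bar>"
    using le[of v w] le[of w v] by (simp add: abs_le_iff abs_minus_commute)
next
  have "f i (- d) = 0" "f i d = 0" if "i \<in> I" for i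
    using assms(2)[OF that] profile_ends by simp_all
  then show "(SUP i\<in>I. f i (- d)) = 0" "(SUP i\<in>I. f i d) = 0"
    using assms(1) by (simp_all cong: SUP_cong)
qed

lemma profile_INF:
  assumes "I \<noteq> {}" and "\<And>i. i \<in> I \<Longrightarrow> profile (f i)"
  shows "profile (\<lambda>v. INF i\<in>I. f i v)"
proof (rule profileI)
  have bdd: "bdd_below ((\<lambda>i. f i v) ` I)" if "v \<in> {-d..d}" for v
    using assms(2) abs_profile_le[OF _ that] by (intro bdd_belowI[of _ "- d"]) (force simp: abs_le_iff)
  have le: "(INF i\<in>I. f i w) - \<bar>v - w\<bar> \<le> (INF i\<in>I. f i v)"
    if "v \<in> {-d..d}" "w \<in> {-d..d}" for v w
  proof (rule cINF_greatest[OF assms(1)])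
    fix i assume i: "i \<in> I"
    have "f i w - \<bar>v - w\<bar> \<le> f i v" "(INF i\<in>I. f i w) \<le> f i w"
      using profile_lipschitz[OF assms(2)[OF i] that] cINF_lower[OF bdd[OF that(2)] i]
      by (auto simp: abs_le_iff)
    then show "(INF i\<in>I. f i w) - \<bar>v - w\<bar> \<le> f i v"
      by linarith
  qed
  fix v w assume "v \<in> {-d..d}" "w \<in> {-d..d}"
  then show "\<bar>(INF i\<in>I. f i v) - (INF i\<in>I. f i w)\<bar> \<le> \<bar>v - w\<bar>"
    using le[of v w] le[of w v] by (simp add: abs_le_iff abs_minus_commute)
next
  have "f i (- d) = 0" "f i d = 0" if "i \<in> I" for i
    using assms(2)[OF that] profile_ends by simp_all
  then show "(INF i\<in>I. f i (- d)) = 0" "(INF i\<in>I. f i d) = 0"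
    using assms(1) by (simp_all cong: INF_cong)
qed

lemma profile_pair_INT:
  assumes "I \<noteq> {}" and "\<And>i. i \<in> I \<Longrightarrow> profile_pair (L i) (U i)"
  shows "profile_pair (\<lambda>v. SUP i\<in>I. L i v) (\<lambda>v. INF i\<in>I. U i v)"
  unfolding profile_pair_def
proof (intro conjI ballI)
  show "profile (\<lambda>v. SUP i\<in>I. L i v)" "profile (\<lambda>v. INF i\<in>I. U i v)"
    using assms(2) by (auto simp: profile_pair_def intro!: profile_SUP[OF assms(1)] profile_INF[OF assms(1)])
  fix v assume v: "v \<in> {-d..d}"
  show "(SUP i\<in>I. L i v) \<le> 0"
    using profile_pair_bounds[OF assms(2) v] by (intro cSUP_least[OF assms(1)]) blast
  show "0 \<le> (INF i\<in>I. U i v)"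
    using profile_pair_bounds[OF assms(2) v] by (intro cINF_greatest[OF assms(1)]) blast
qed

lemma region_INT:
  assumes "I \<noteq> {}" and "\<And>i. i \<in> I \<Longrightarrow> profile_pair (L i) (U i)"
  shows "(\<Inter>i\<in>I. region (L i) (U i)) = region (\<lambda>v. SUP i\<in>I. L i v) (\<lambda>v. INF i\<in>I. U i v)"
proof -
  have bdd: "bdd_above ((\<lambda>i. L i v) ` I)" "bdd_below ((\<lambda>i. U i v) ` I)" if "v \<in> {-d..d}" for v
    using assms(2) profile_pair_bounds[OF _ that]
    by (auto intro!: bdd_aboveI[of _ 0] bdd_belowI[of _ 0])
  have "p \<in> region (L i) (U i) \<longleftrightarrow> p \<in> lens \<and> L i (dist_diff p) \<le> height p \<and> height p \<le> U i (dist_diff p)"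
    for i p
    by (simp add: region_def)
  then show ?thesis
    using assms(1) bdd[OF dist_diff_mem]
    by (auto simp: region_def cSUP_le_iff le_cINF_iff)
qed

end

lemma slender_adornment_neq: "slender_adornment S x y \<Longrightarrow> x \<noteq> y"
  by (simp add: slender_adornment_def adornment_sides_def)

lemma slender_adornment_Un:
  assumes "slender_adornment A x y" and "slender_adornment B x y"
  shows "slender_adornment (A \<union> B) x y"
proof -
  interpret base_segment x y
    using slender_adornment_neq[OF assms(1)] by unfold_locales
  obtain L1 U1 L2 U2 where "profile_pair L1 U1" "A = region L1 U1" "profile_pair L2 U2" "B = region L2 U2"
    using assms slender_adornment_iff_region by metis
  then show ?thesis
    using slender_adornment_region[OF profile_pair_Un] region_Un by metis
qed

lemma slender_adornment_Union:
  assumes "finite F" and "F \<noteq> {}" and "\<And>S. S \<in> F \<Longrightarrow> slender_adornment S x y"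
  shows "slender_adornment (\<Union>F) x y"
  using assms by (induction F rule: finite_ne_induct) (auto intro: slender_adornment_Un)

lemma slender_adornment_Inter:
  assumes "F \<noteq> {}" and "\<And>S. S \<in> F \<Longrightarrow> slender_adornment S x y"
  shows "slender_adornment (\<Inter>F) x y"
proof -
  obtain S0 where "S0 \<in> F"
    using assms(1) by blast
  interpret base_segment x y
    using slender_adornment_neq[OF assms(2)[OF \<open>S0 \<in> F\<close>]] by unfold_locales
  have "\<forall>S\<in>F. \<exists>LU. profile_pair (fst LU) (snd LU) \<and> region (fst LU) (snd LU) = S"
  proof
    fix S assume "S \<in> F"
    then obtain L U where "profile_pair L U" "region L U = S"
      using assms(2) slender_adornment_iff_region by metis
    then show "\<exists>LU. profile_pair (fst LU) (snd LU) \<and> region (fst LU) (snd LU) = S"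
      by (intro exI[of _ "(L, U)"]) simp
  qed
  then obtain LU where LU: "\<forall>S\<in>F. profile_pair (fst (LU S)) (snd (LU S)) \<and> region (fst (LU S)) (snd (LU S)) = S"
    by (rule bchoice[THEN exE])
  then have "\<Inter>F = (\<Inter>S\<in>F. region (fst (LU S)) (snd (LU S)))"
    by simp
  also have "\<dots> = region (\<lambda>v. SUP S\<in>F. fst (LU S) v) (\<lambda>v. INF S\<in>F. snd (LU S) v)"
    using LU by (intro region_INT[OF assms(1)]) simp
  finally show ?thesis
    using LU slender_adornment_region[OF profile_pair_INT[OF assms(1)]] by simp
qed

theorem mainTheorem4:
  fixes x y :: "real^2"
  shows "(\<forall>F. finite F \<and> F \<noteq> {} \<and> (\<forall>S\<in>F. slender_adornment S x y)
            \<longrightarrow> slender_adornment (\<Union>F) x y)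
       \<and> (\<forall>F. F \<noteq> {} \<and> (\<forall>S\<in>F. slender_adornment S x y)
            \<longrightarrow> slender_adornment (\<Inter>F) x y)"
  using slender_adornment_Union slender_adornment_Inter by blast

end
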